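(* Let $\mathcal Y=(Y_n)$ be an increasing sequence of finite subsets of $\Gamma$ with union $\Gamma$, let $(v_n)$ be an inflating sequence for $\mathcal Y$, and let $\mathbf A=(A_n)\in\mathcal S_{\mathcal Y}({\sf BDO}(\Gamma))$. Then the operator $\mathrm{Op}(\mathbf A)=\sum_{n=1}^\infty R_{v_n}A_nP_{Y_n}R_{v_n}^{-1}$ (a strongly convergent series) is band-dominated, i.e. belongs to ${\sf BDO}(\Gamma)$.
   Context: $\Gamma$ is a countable discrete group. For $X\subseteq\Gamma$, $P_X$ is the orthogonal projection of $l^2(\Gamma)$ onto $l^2(X)$. For $r\in\Gamma$, $(L_ru)(t)=u(r^{-1}t)$ and $(R_ru)(t)=u(tr)$ on $l^2(\Gamma)$. ${\sf BDO}(\Gamma)$ is the smallest closed subalgebra of $L(l^2(\Gamma))$ containing all $L_r$ and all multiplication operators $aI$, $a\in l^\infty(\Gamma)$. $\mathcal F_{\mathcal Y}$ is the $C^*$-algebra of bounded sequences $(A_n)$ of operators $A_n$ on $\mathrm{im}\,P_{Y_n}$ (componentwise operations, supremum norm); $\mathcal S_{\mathcal Y}({\sf BDO}(\Gamma))$ is its smallest closed $C^*$-subalgebra containing all $(P_{Y_n}AP_{Y_n})$, $A\in{\sf BDO}(\Gamma)$. A sequence $(v_n)$ in $\Gamma$ is inflating for a sequence of sets $(Z_n)$ if $Z_mv_m^{-1}\cap Z_nv_n^{-1}=\emptyset$ for $m\ne n$ (here $Zv^{-1}=\{zv^{-1}:z\in Z\}$). For every $(A_n)\in\mathcal F_{\mathcal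 Y}$ the series defining $\mathrm{Op}$ converges strongly. *)

theory Defs
  imports "HOL-Analysis.Analysis"
begin

text \<open>The group Gamma is a type of class group_add (not necessarily commutative),
  written additively: the product r t is r + t, the inverse of r is - r.
  Vectors of l2(Gamma) are functions Gamma to complex that are square summable;
  operators are functions on such vectors, only their behaviour on the relevant
  Hilbert space matters.\<close>

type_synonym 'g vec = "'g \<Rightarrow> complex"
type_synonym 'g op = "'g vec \<Rightarrow> 'g vec"

definition l2 :: "'g vec set" where
  "l2 = {u. (\<lambda>t. (cmod (u t))^2) summable_on UNIV}"

definition l2norm :: "'g vec \<Rightarrow> real" where
  "l2norm u = sqrt (infsum (\<lambda>t. (cmod (u t))^2) UNIV)"

definition l2inner :: "'g vec \<Rightarrow> 'g vec \<Rightarrow> complex" where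
  "l2inner u v = infsum (\<lambda>t. u t * cnj (v t)) UNIV"

definition l2_on :: "'g set \<Rightarrow> 'g vec set" where
  "l2_on X = {u \<in> l2. \<forall>t. t \<notin> X \<longrightarrow> u t = 0}"

definition bounded_op_on :: "'g vec set \<Rightarrow> 'g op \<Rightarrow> bool" where
  "bounded_op_on S A \<longleftrightarrow>
     (\<forall>u\<in>S. A u \<in> S) \<and>
     (\<forall>u\<in>S. \<forall>w\<in>S. \<forall>c. A (\<lambda>t. c * u t + w t) = (\<lambda>t. c * A u t + A w t)) \<and>
     (\<exists>C. \<forall>u\<in>S. l2norm (A u) \<le> C * l2norm u)"

definition opnorm_on :: "'g vec set \<Rightarrow> 'g op \<Rightarrow> real" where
  "opnorm_on S A = Sup ((\<lambda>u. l2norm (A u)) ` {u \<in> S. l2norm u \<le> 1})"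

definition op_diff :: "'g op \<Rightarrow> 'g op \<Rightarrow> 'g op" where
  "op_diff A B = (\<lambda>u t. A u t - B u t)"

definition Pop :: "'g set \<Rightarrow> 'g op" where
  "Pop X u = (\<lambda>t. if t \<in> X then u t else 0)"

definition Lop :: "'g::group_add \<Rightarrow> 'g op" where
  "Lop r u = (\<lambda>t. u (- r + t))"

definition Rop :: "'g::group_add \<Rightarrow> 'g op" where
  "Rop r u = (\<lambda>t. u (t + r))"

definition mult_op :: "'g vec \<Rightarrow> 'g op" where
  "mult_op a u = (\<lambda>t. a t * u t)"

inductive_set bdo_alg :: "('g::group_add) op set" where
  shift: "Lop r \<in> bdo_alg"
| mult: "bdd_above (range (\<lambda>t. cmod (a t))) \<Longrightarrow> mult_op a \<in> bdo_alg"
| add: "A \<in> bdo_alg \<Longrightarrow> B \<in> bdo_alg \<Longrightarrow> (\<lambda>u t. A u t + B u t) \<in> bdo_alg"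
| scale: "A \<in> bdo_alg \<Longrightarrow> (\<lambda>u t. c * A u t) \<in> bdo_alg"
| comp: "A \<in> bdo_alg \<Longrightarrow> B \<in> bdo_alg \<Longrightarrow> (\<lambda>u. A (B u)) \<in> bdo_alg"

definition BDO :: "('g::group_add) op set" where
  "BDO = {A. bounded_op_on l2 A \<and>
             (\<forall>e>0. \<exists>B\<in>bdo_alg. opnorm_on l2 (op_diff A B) \<le> e)}"

definition FY :: "(nat \<Rightarrow> 'g set) \<Rightarrow> (nat \<Rightarrow> 'g op) set" where
  "FY Y = {A. (\<forall>n. bounded_op_on (l2_on (Y n)) (A n)) \<and>
              bdd_above (range (\<lambda>n. opnorm_on (l2_on (Y n)) (A n)))}"

definition adjoint_on :: "'g set \<Rightarrow> 'g op \<Rightarrow> 'g op \<Rightarrow> bool" where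
  "adjoint_on X B S \<longleftrightarrow> (\<forall>v\<in>l2_on X. B v \<in> l2_on X) \<and>
     (\<forall>u\<in>l2_on X. \<forall>v\<in>l2_on X. l2inner (S u) v = l2inner u (B v))"

inductive_set sy_alg :: "(nat \<Rightarrow> ('g::group_add) set) \<Rightarrow> (nat \<Rightarrow> 'g op) set"
  for Y :: "nat \<Rightarrow> 'g set" where
  gen: "A \<in> BDO \<Longrightarrow> (\<lambda>n u. Pop (Y n) (A (Pop (Y n) u))) \<in> sy_alg Y"
| add: "S \<in> sy_alg Y \<Longrightarrow> T \<in> sy_alg Y \<Longrightarrow> (\<lambda>n u t. S n u t + T n u t) \<in> sy_alg Y"
| scale: "S \<in> sy_alg Y \<Longrightarrow> (\<lambda>n u t. c * S n u t) \<in> sy_alg Y"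
| comp: "S \<in> sy_alg Y \<Longrightarrow> T \<in> sy_alg Y \<Longrightarrow> (\<lambda>n u. S n (T n u)) \<in> sy_alg Y"
| adj: "S \<in> sy_alg Y \<Longrightarrow> (\<forall>n. adjoint_on (Y n) (B n) (S n)) \<Longrightarrow> B \<in> sy_alg Y"

definition SY :: "(nat \<Rightarrow> ('g::group_add) set) \<Rightarrow> (nat \<Rightarrow> 'g op) set" where
  "SY Y = {A \<in> FY Y. \<forall>e>0. \<exists>B\<in>sy_alg Y.
              \<forall>n. opnorm_on (l2_on (Y n)) (op_diff (A n) (B n)) \<le> e}"

definition inflating :: "(nat \<Rightarrow> 'g::group_add) \<Rightarrow> (nat \<Rightarrow> 'g set) \<Rightarrow> bool" where
  "inflating v Z \<longleftrightarrow> (\<forall>m n. m \<noteq> n \<longrightarrow>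
      (\<lambda>z. z + - v m) ` Z m \<inter> (\<lambda>z. z + - v n) ` Z n = {})"

definition Op_term :: "(nat \<Rightarrow> 'g::group_add) \<Rightarrow> (nat \<Rightarrow> 'g set) \<Rightarrow> (nat \<Rightarrow> 'g op) \<Rightarrow> nat \<Rightarrow> 'g op" where
  "Op_term v Y A n u = Rop (v n) (A n (Pop (Y n) (Rop (- v n) u)))"

definition Op :: "(nat \<Rightarrow> 'g::group_add) \<Rightarrow> (nat \<Rightarrow> 'g set) \<Rightarrow> (nat \<Rightarrow> 'g op) \<Rightarrow> 'g op" where
  "Op v Y A u = (THE w. w \<in> l2 \<and>
      (\<lambda>N. l2norm (\<lambda>t. w t - (\<Sum>n<N. Op_term v Y A n u t))) \<longlonglongrightarrow> 0)"

end

theory Submission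
  imports Defs
begin

text \<open>
  A band operator is a finite sum \<Sum> a_i L_{r_i} with bounded coefficients
  a_i.  Every sequence in the *-algebra generated by the compressions
  P_{Y_n} A P_{Y_n} (A band-dominated) can be approximated, uniformly in n, by
  compressed band operators P_{Y_n} (\<Sum> a_{n,i} L_{r_i}) P_{Y_n} whose shifts r_i
  do not depend on n and whose coefficients are uniformly bounded; this class is
  closed under sums, scalar multiples, products, adjoints and uniform limits, so
  it contains S_Y(BDO).  Because (v_n) is inflating, the blocks of
  Op(A) = \<Sum> R_{v_n} A_n P_{Y_n} R_{v_n}^{-1} act on pairwise disjoint parts of
  \<Gamma>; gluing the approximants of the blocks gives one band operator on l2(\<Gamma>)
  with the shifts r_i, and gluing preserves uniform error bounds.

  The main theorem combines these; the argument uses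
  only finiteness of the Y n and the inflating property, not that the Y n
  increase and exhaust \<Gamma>.
\<close>

section \<open>Square-summable functions\<close>

text \<open>Squared modulus of the values of a vector; l2 norms are controlled
  through finite partial sums of this function.\<close>
definition sq :: "'g vec \<Rightarrow> 'g \<Rightarrow> real" where "sq u t = (cmod (u t))^2"

lemma sq_ge0[simp]: "0 \<le> sq u t" by (simp add: sq_def)

lemma nonneg_bounded_partial_sums:
  fixes f :: "'a \<Rightarrow> real"
  assumes "\<And>t. 0 \<le> f t" "\<And>F. finite F \<Longrightarrow> sum f F \<le> B"
  shows "f summable_on UNIV \<and> infsum f UNIV \<le> B"
proof -
  have s: "f summable_on UNIV"
    by (rule nonneg_bdd_above_summable_on) (use assms in \<open>auto intro!: bdd_aboveI\<close>)
  moreover have "infsum f UNIV \<le> B"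
    by (rule infsum_le_finite_sums[OF s]) (use assms in auto)
  ultimately show ?thesis by simp
qed

lemma l2I:
  assumes "\<And>F. finite F \<Longrightarrow> sum (sq u) F \<le> B^2" "0 \<le> B"
  shows "u \<in> l2 \<and> l2norm u \<le> B"
proof -
  have s: "sq u summable_on UNIV \<and> infsum (sq u) UNIV \<le> B^2"
    by (rule nonneg_bounded_partial_sums) (use assms in auto)
  have "l2norm u = sqrt (infsum (sq u) UNIV)" unfolding l2norm_def sq_def[abs_def] ..
  also have "\<dots> \<le> sqrt (B^2)" using s by (simp only: real_sqrt_le_mono)
  also have "\<dots> = B" using assms(2) by simp
  finally show ?thesis using s unfolding l2_def sq_def by simp
qed

lemma l2_summable: "u \<in> l2 \<Longrightarrow> sq u summable_on UNIV"
  unfolding l2_def sq_def by auto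

lemma l2norm_ge0[simp]: "0 \<le> l2norm u"
  unfolding l2norm_def by (auto intro!: infsum_nonneg)

lemma l2norm_sq: "u \<in> l2 \<Longrightarrow> (l2norm u)^2 = infsum (sq u) UNIV"
  unfolding l2norm_def sq_def by (simp add: infsum_nonneg)

lemma l2_finite_sum_le: "u \<in> l2 \<Longrightarrow> finite F \<Longrightarrow> sum (sq u) F \<le> (l2norm u)^2"
  by (simp add: l2norm_sq finite_sum_le_infsum l2_summable)

lemma l2_pointwise_le: "u \<in> l2 \<Longrightarrow> cmod (u t) \<le> l2norm u"
proof -
  assume u: "u \<in> l2"
  have "sq u t \<le> (l2norm u)^2" using l2_finite_sum_le[OF u, of "{t}"] by simp
  then show ?thesis unfolding sq_def using abs_le_square_iff[of "cmod (u t)" "l2norm u"] by simp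
qed

lemma L2_set_le_l2norm: "u \<in> l2 \<Longrightarrow> finite F \<Longrightarrow> L2_set (\<lambda>t. cmod (u t)) F \<le> l2norm u"
proof -
  assume u: "u \<in> l2" and F: "finite F"
  have "L2_set (\<lambda>t. cmod (u t)) F = sqrt (sum (sq u) F)" unfolding L2_set_def sq_def by simp
  also have "\<dots> \<le> sqrt ((l2norm u)^2)" using real_sqrt_le_mono[OF l2_finite_sum_le[OF u F]] .
  finally show ?thesis by simp
qed

text \<open>Minkowski's inequality, reduced to its finite version \<open>L2_set_triangle_ineq\<close>.\<close>
lemma l2_add:
  assumes "u \<in> l2" "w \<in> l2"
  shows "(\<lambda>t. u t + w t) \<in> l2 \<and> l2norm (\<lambda>t. u t + w t) \<le> l2norm u + l2norm w"
proof (rule l2I)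
  fix F :: "'a set" assume F: "finite F"
  have "L2_set (\<lambda>t. cmod (u t + w t)) F \<le> L2_set (\<lambda>t. cmod (u t) + cmod (w t)) F"
    by (rule L2_set_mono) (auto simp: norm_triangle_ineq)
  also have "\<dots> \<le> L2_set (\<lambda>t. cmod (u t)) F + L2_set (\<lambda>t. cmod (w t)) F"
    by (rule L2_set_triangle_ineq)
  also have "\<dots> \<le> l2norm u + l2norm w"
    using L2_set_le_l2norm[OF assms(1) F] L2_set_le_l2norm[OF assms(2) F] by simp
  finally have "L2_set (\<lambda>t. cmod (u t + w t)) F \<le> l2norm u + l2norm w" .
  from power_mono[OF this L2_set_nonneg, of 2]
  show "sum (sq (\<lambda>t. u t + w t)) F \<le> (l2norm u + l2norm w)^2"
    unfolding L2_set_def sq_def by (simp add: sum_nonneg)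
qed simp

lemma l2norm_scale: "l2norm (\<lambda>t. c * u t) = cmod c * l2norm u"
proof -
  have e: "(\<lambda>t. (cmod (c * u t))^2) = (\<lambda>t. (cmod c)^2 * (cmod (u t))^2)"
    by (auto simp: norm_mult power_mult_distrib)
  show ?thesis unfolding l2norm_def e infsum_cmult_right' by (simp add: real_sqrt_mult)
qed

lemma l2_scale: "u \<in> l2 \<Longrightarrow> (\<lambda>t. c * u t) \<in> l2"
proof -
  assume u: "u \<in> l2"
  have "sq (\<lambda>t. c * u t) = (\<lambda>t. (cmod c)^2 * sq u t)"
    by (auto simp: sq_def norm_mult power_mult_distrib)
  then have "sq (\<lambda>t. c * u t) summable_on UNIV"
    using summable_on_cmult_right[OF l2_summable[OF u]] by simp
  then show ?thesis unfolding l2_def sq_def by simp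
qed

lemma l2_diff:
  assumes "u \<in> l2" "w \<in> l2"
  shows "(\<lambda>t. u t - w t) \<in> l2 \<and> l2norm (\<lambda>t. u t - w t) \<le> l2norm u + l2norm w"
  using l2_add[OF assms(1) l2_scale[OF assms(2), of "-1"]] l2norm_scale[of "-1" w] by simp

lemma l2_triangle: "u \<in> l2 \<Longrightarrow> w \<in> l2 \<Longrightarrow> l2norm u \<le> l2norm (\<lambda>t. u t - w t) + l2norm w"
  using l2_add[OF conjunct1[OF l2_diff[of u w]], of w] by simp

lemma l2_comp_inj:
  assumes "u \<in> l2" "inj h"
  shows "(\<lambda>t. u (h t)) \<in> l2 \<and> l2norm (\<lambda>t. u (h t)) \<le> l2norm u"
proof (rule l2I)
  fix F :: "'b set" assume F: "finite F"
  have "sum (sq (\<lambda>t. u (h t))) F = sum (sq u) (h ` F)"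
    using sum.reindex[of h F "sq u"] assms(2) by (simp add: sq_def inj_on_def)
  also have "\<dots> \<le> (l2norm u)^2" using l2_finite_sum_le[OF assms(1)] F by simp
  finally show "sum (sq (\<lambda>t. u (h t))) F \<le> (l2norm u)^2" .
qed simp

lemma l2_mult:
  assumes "u \<in> l2" "\<And>t. cmod (a t) \<le> M"
  shows "(\<lambda>t. a t * u t) \<in> l2 \<and> l2norm (\<lambda>t. a t * u t) \<le> M * l2norm u"
proof (rule l2I)
  fix F :: "'a set" assume F: "finite F"
  have "sum (sq (\<lambda>t. a t * u t)) F \<le> sum (\<lambda>t. M^2 * sq u t) F"
  proof (rule sum_mono)
    fix t
    have "(cmod (a t))^2 \<le> M^2" by (rule power_mono[OF assms(2)]) simp
    from mult_right_mono[OF this, of "(cmod (u t))^2"]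
    show "sq (\<lambda>t. a t * u t) t \<le> M^2 * sq u t"
      by (simp add: sq_def norm_mult power_mult_distrib)
  qed
  also have "\<dots> = M^2 * sum (sq u) F" by (simp add: sum_distrib_left)
  also have "\<dots> \<le> M^2 * (l2norm u)^2" using l2_finite_sum_le[OF assms(1) F] by (simp add: mult_left_mono)
  finally show "sum (sq (\<lambda>t. a t * u t)) F \<le> (M * l2norm u)^2" by (simp add: power_mult_distrib)
next
  have "0 \<le> M" using assms(2)[of undefined] norm_ge_zero order_trans by blast
  then show "0 \<le> M * l2norm u" by simp
qed

lemma l2_Pop:
  assumes "u \<in> l2"
  shows "Pop X u \<in> l2 \<and> l2norm (Pop X u) \<le> l2norm u"
proof (rule l2I)
  fix F :: "'a set" assume F: "finite F"
  have "sum (sq (Pop X u)) F \<le> sum (sq u) F"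
    by (rule sum_mono) (auto simp: sq_def Pop_def)
  also have "\<dots> \<le> (l2norm u)^2" using l2_finite_sum_le[OF assms F] .
  finally show "sum (sq (Pop X u)) F \<le> (l2norm u)^2" .
qed simp

lemma l2_finite_support:
  assumes "finite Y" "\<And>t. t \<notin> Y \<Longrightarrow> u t = 0"
  shows "u \<in> l2 \<and> l2norm u = sqrt (sum (sq u) Y)"
proof -
  have "sq u summable_on UNIV \<longleftrightarrow> sq u summable_on Y"
    by (rule summable_on_cong_neutral) (use assms in \<open>auto simp: sq_def\<close>)
  then have s: "sq u summable_on UNIV" using assms(1) by simp
  have "infsum (sq u) UNIV = infsum (sq u) Y"
    by (rule infsum_cong_neutral) (use assms in \<open>auto simp: sq_def\<close>)
  then show ?thesis using s assms(1) unfolding l2_def l2norm_def sq_def by auto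
qed

lemma l2norm_zero[simp]: "l2norm (\<lambda>t. 0) = 0"
  unfolding l2norm_def by simp

lemma l2_zero[simp]: "(\<lambda>t. 0) \<in> l2"
  unfolding l2_def by simp

lemma l2_zero_iff: "u \<in> l2 \<Longrightarrow> l2norm u = 0 \<Longrightarrow> u = (\<lambda>t. 0)"
  using l2_pointwise_le[of u] by (auto intro!: ext)

lemma l2_tendsto_pointwise:
  assumes "w \<in> l2" "\<And>N. g N \<in> l2" "(\<lambda>N. l2norm (\<lambda>t. w t - g N t)) \<longlonglongrightarrow> 0"
  shows "(\<lambda>N. g N t) \<longlonglongrightarrow> w t"
proof -
  have "\<forall>N. norm (w t - g N t) \<le> l2norm (\<lambda>t. w t - g N t)"
    using l2_pointwise_le[OF conjunct1[OF l2_diff[OF assms(1,2)]]] by simp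
  then have "(\<lambda>N. w t - g N t) \<longlonglongrightarrow> 0"
    by (rule Lim_null_comparison[OF always_eventually assms(3)])
  from tendsto_diff[OF tendsto_const[of "w t"] this] show ?thesis by simp
qed

lemma l2_truncation_tendsto:
  assumes w: "w \<in> l2" and T: "\<And>t. w t \<noteq> 0 \<Longrightarrow> eventually (\<lambda>N. t \<in> T N) sequentially"
  shows "(\<lambda>N. l2norm (\<lambda>t. w t - Pop (T N) w t)) \<longlonglongrightarrow> 0"
proof (rule LIMSEQ_I)
  fix r :: real assume r: "0 < r"
  obtain G where G: "finite G" "dist (sum (sq w) G) (infsum (sq w) UNIV) \<le> (r/2)^2"
    using infsum_finite_approximation[OF l2_summable[OF w], of "(r/2)^2"] r by auto
  have "eventually (\<lambda>N. w t = 0 \<or> t \<in> T N) sequentially" for t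
    using T[of t] by (cases "w t = 0") (auto elim: eventually_mono)
  then have "eventually (\<lambda>N. \<forall>t\<in>G. w t = 0 \<or> t \<in> T N) sequentially"
    by (intro eventually_ball_finite[OF G(1)]) simp
  then obtain N0 where N0: "\<And>N t. N \<ge> N0 \<Longrightarrow> t \<in> G \<Longrightarrow> w t = 0 \<or> t \<in> T N"
    unfolding eventually_sequentially by blast
  show "\<exists>no. \<forall>N\<ge>no. norm (l2norm (\<lambda>t. w t - Pop (T N) w t) - 0) < r"
  proof (intro exI allI impI)
    fix N assume N: "N \<ge> N0"
    define h where "h = (\<lambda>t. w t - Pop (T N) w t)"
    have hG: "h t = 0" if "t \<in> G" for t using N0[OF N that] by (auto simp: h_def Pop_def)
    have "h \<in> l2 \<and> l2norm h \<le> r/2"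
    proof (rule l2I)
      fix H :: "'a set" assume H: "finite H"
      have "sum (sq h) H = sum (sq h) (H - G)"
        by (rule sum.mono_neutral_right) (use H hG in \<open>auto simp: sq_def\<close>)
      also have "\<dots> \<le> sum (sq w) (H - G)"
        by (rule sum_mono) (auto simp: h_def Pop_def sq_def)
      also have "\<dots> \<le> (r/2)^2"
      proof -
        have "sum (sq w) (H - G) + sum (sq w) G = sum (sq w) ((H - G) \<union> G)"
          by (rule sum.union_disjoint[symmetric]) (use H G in auto)
        also have "\<dots> \<le> infsum (sq w) UNIV"
          by (rule finite_sum_le_infsum[OF l2_summable[OF w]]) (use H G in auto)
        finally show ?thesis using G(2) by (simp add: dist_real_def)
      qed
      finally show "sum (sq h) H \<le> (r/2)^2" .
    qed (use r in simp)
    then show "norm (l2norm (\<lambda>t. w t - Pop (T N) w t) - 0) < r" using r by (simp add: h_def)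
  qed
qed

lemma l2_on_l2: "u \<in> l2_on Y \<Longrightarrow> u \<in> l2"
  by (simp add: l2_on_def)

lemma Pop_id: "u \<in> l2_on Y \<Longrightarrow> Pop Y u = u"
  by (auto simp: Pop_def l2_on_def)

lemma Pop_in: "t \<in> X \<Longrightarrow> Pop X u t = u t"
  by (simp add: Pop_def)

lemma Pop_Pop[simp]: "Pop Y (Pop Y u) = Pop Y u"
  by (auto simp: Pop_def)

lemma Pop_l2_on: "u \<in> l2 \<Longrightarrow> Pop Y u \<in> l2_on Y"
  using l2_Pop by (auto simp: l2_on_def Pop_def)

lemma l2_on_add: "u \<in> l2_on Y \<Longrightarrow> w \<in> l2_on Y \<Longrightarrow> (\<lambda>t. u t + w t) \<in> l2_on Y"
  using l2_add by (auto simp: l2_on_def)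

lemma l2_on_diff: "u \<in> l2_on Y \<Longrightarrow> w \<in> l2_on Y \<Longrightarrow> (\<lambda>t. u t - w t) \<in> l2_on Y"
  using l2_diff by (auto simp: l2_on_def)

lemma l2_on_scale: "u \<in> l2_on Y \<Longrightarrow> (\<lambda>t. c * u t) \<in> l2_on Y"
  using l2_scale by (auto simp: l2_on_def)

lemma l2_on_zero[simp]: "(\<lambda>t. 0) \<in> l2_on Y"
  by (simp add: l2_on_def)

lemma l2inner_finite:
  assumes "finite Y" "\<And>t. t \<notin> Y \<Longrightarrow> w t = 0"
  shows "l2inner u w = (\<Sum>t\<in>Y. u t * cnj (w t))"
proof -
  have "infsum (\<lambda>t. u t * cnj (w t)) UNIV = infsum (\<lambda>t. u t * cnj (w t)) Y"
    by (rule infsum_cong_neutral) (use assms in auto)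
  then show ?thesis unfolding l2inner_def using assms(1) by simp
qed

lemma l2norm_finite:
  assumes "finite Y" "u \<in> l2_on Y"
  shows "l2norm u = L2_set (\<lambda>t. cmod (u t)) Y"
  using l2_finite_support[OF assms(1), of u] assms(2) unfolding l2_on_def L2_set_def sq_def by auto

lemma sum_self_inner:
  "(\<Sum>t\<in>Y. z t * cnj (z t)) = complex_of_real ((L2_set (\<lambda>t. cmod (z t)) Y)^2)"
proof -
  have "(\<Sum>t\<in>Y. z t * cnj (z t)) = (\<Sum>t\<in>Y. complex_of_real ((cmod (z t))^2))"
    by (rule sum.cong) (auto simp: complex_mult_cnj cmod_def)
  also have "\<dots> = complex_of_real ((L2_set (\<lambda>t. cmod (z t)) Y)^2)"
    unfolding L2_set_def by (simp add: sum_nonneg)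
  finally show ?thesis .
qed

lemma cauchy_schwarz_finite:
  "cmod (\<Sum>t\<in>Y. x t * cnj (y t)) \<le> L2_set (\<lambda>t. cmod (x t)) Y * L2_set (\<lambda>t. cmod (y t)) Y"
proof -
  have "cmod (\<Sum>t\<in>Y. x t * cnj (y t)) \<le> (\<Sum>t\<in>Y. cmod (x t * cnj (y t)))" by (rule norm_sum)
  also have "\<dots> = (\<Sum>t\<in>Y. \<bar>cmod (x t)\<bar> * \<bar>cmod (y t)\<bar>)" by (simp add: norm_mult)
  also have "\<dots> \<le> L2_set (\<lambda>t. cmod (x t)) Y * L2_set (\<lambda>t. cmod (y t)) Y" by (rule L2_set_mult_ineq)
  finally show ?thesis .
qed

lemma cnj_swap: "(\<Sum>t\<in>Y. x t * cnj (y t)) = cnj (\<Sum>t\<in>Y. y t * cnj (x t))"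
  by (simp add: cnj_sum mult.commute)

section \<open>Bounded operators and the operator norm\<close>

lemma bounded_op_homog:
  assumes "bounded_op_on S A" "(\<lambda>t. 0) \<in> S" "x \<in> S"
  shows "A (\<lambda>t. c * x t) = (\<lambda>t. c * A x t)"
proof -
  have l: "\<And>u w c. u \<in> S \<Longrightarrow> w \<in> S \<Longrightarrow> A (\<lambda>t. c * u t + w t) = (\<lambda>t. c * A u t + A w t)"
    using assms(1) unfolding bounded_op_on_def by blast
  have "A (\<lambda>t. 0) t = A (\<lambda>t. 0) t + A (\<lambda>t. 0) t" for t
    using fun_cong[OF l[OF assms(2) assms(2), of 1], of t] by simp
  then have z: "A (\<lambda>t. 0) = (\<lambda>t. 0)" by (simp add: fun_eq_iff)
  show ?thesis using l[OF assms(3) assms(2), of c] z by simp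
qed

lemma bounded_op_bound:
  assumes "bounded_op_on S A"
  obtains K where "\<And>u. u \<in> S \<Longrightarrow> l2norm (A u) \<le> K * l2norm u"
  using assms unfolding bounded_op_on_def by blast

lemma opnorm_le:
  assumes S: "S \<subseteq> l2" "\<And>u c. u \<in> S \<Longrightarrow> (\<lambda>t. c * u t) \<in> S"
    and hom: "\<And>u c. u \<in> S \<Longrightarrow> D (\<lambda>t. c * u t) = (\<lambda>t. c * D u t)"
    and bd: "\<And>u. u \<in> S \<Longrightarrow> l2norm (D u) \<le> K * l2norm u"
    and u: "u \<in> S"
  shows "l2norm (D u) \<le> opnorm_on S D * l2norm u"
proof (cases "l2norm u = 0")
  case True
  then have u0: "u = (\<lambda>t. 0)" using l2_zero_iff[of u] S u by auto
  have "D (\<lambda>t. 0) = (\<lambda>t. 0)" using hom[OF u, of 0] by simp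
  then show ?thesis using u0 True by simp
next
  case False
  then have n: "0 < l2norm u" using l2norm_ge0[of u] by linarith
  define c where "c = complex_of_real (1 / l2norm u)"
  have cm: "cmod c = 1 / l2norm u" using n by (simp add: c_def norm_divide)
  define x where "x = (\<lambda>t. c * u t)"
  have x: "x \<in> S" unfolding x_def using S(2)[OF u] .
  have xn: "l2norm x = 1" unfolding x_def l2norm_scale cm using n by simp
  have Dx: "l2norm (D x) = l2norm (D u) / l2norm u"
    unfolding x_def hom[OF u] l2norm_scale cm by simp
  have bdd: "bdd_above ((\<lambda>u. l2norm (D u)) ` {u \<in> S. l2norm u \<le> 1})"
  proof (rule bdd_aboveI2)
    fix w assume "w \<in> {u \<in> S. l2norm u \<le> 1}"
    then have "l2norm (D w) \<le> K * l2norm w" "l2norm w \<le> 1" using bd by auto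
    moreover have "K * l2norm w \<le> max K 0 * l2norm w" by (rule mult_right_mono) auto
    moreover have "max K 0 * l2norm w \<le> max K 0 * 1" by (rule mult_left_mono) (use calculation in auto)
    ultimately show "l2norm (D w) \<le> max K 0" by linarith
  qed
  have "l2norm (D x) \<le> opnorm_on S D"
    unfolding opnorm_on_def by (rule cSup_upper[OF _ bdd]) (use x xn in auto)
  then show ?thesis using Dx n by (simp add: field_simps)
qed

lemma opnorm_least:
  assumes "\<And>u. u \<in> S \<Longrightarrow> l2norm u \<le> 1 \<Longrightarrow> l2norm (D u) \<le> e" "u0 \<in> S" "l2norm u0 \<le> 1"
  shows "opnorm_on S D \<le> e"
  unfolding opnorm_on_def by (rule cSup_least) (use assms in auto)

section \<open>Band operators with explicit coefficients\<close>

text \<open>A list of pairs (a, r) encodes the band operator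
  u \<mapsto> \<Sum> a \<cdot> L_r u; every element of \<open>bdo_alg\<close> has this form.\<close>
fun band :: "('g::group_add vec \<times> 'g) list \<Rightarrow> 'g op" where
  "band [] u = (\<lambda>t. 0)"
| "band ((a,r)#xs) u = (\<lambda>t. a t * u (-r + t) + band xs u t)"

lemma band_Cons: "band (p#xs) u = (\<lambda>t. fst p t * u (- snd p + t) + band xs u t)"
  by (cases p) simp

declare band.simps(2)[simp del]

lemma band_sum: "band zs w s = (\<Sum>i<length zs. fst (zs!i) s * w (- snd (zs!i) + s))"
proof (induction zs)
  case (Cons p zs)
  show ?case unfolding band_Cons Cons.IH length_Cons sum.lessThan_Suc_shift by simp
qed simp

definition bcoef :: "('g vec \<times> 'g) list \<Rightarrow> real \<Rightarrow> bool" where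
  "bcoef xs M \<longleftrightarrow> (\<forall>p\<in>set xs. \<forall>t. cmod (fst p t) \<le> M)"

lemma bcoef_Cons[simp]: "bcoef ((a,r)#xs) M \<longleftrightarrow> (\<forall>t. cmod (a t) \<le> M) \<and> bcoef xs M"
  by (auto simp: bcoef_def)

lemma bcoef_Nil[simp]: "bcoef [] M" by (simp add: bcoef_def)

lemma bcoef_max: "bcoef xs M \<Longrightarrow> bcoef xs (max M 0)"
  unfolding bcoef_def by (meson max.coboundedI1)

lemma bcoef_append: "bcoef xs M1 \<Longrightarrow> bcoef ys M2 \<Longrightarrow> bcoef (xs @ ys) (max M1 M2)"
  by (auto simp: bcoef_def max.coboundedI1 max.coboundedI2)

lemma band_l2:
  assumes "u \<in> l2" "bcoef xs M"
  shows "band xs u \<in> l2 \<and> l2norm (band xs u) \<le> real (length xs) * M * l2norm u"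
  using assms(2)
proof (induction xs)
  case Nil then show ?case by simp
next
  case (Cons p xs)
  obtain a r where p: "p = (a,r)" by force
  have inj: "inj (\<lambda>t::'a. -r + t)" by (simp add: inj_def)
  note sh = l2_comp_inj[OF assms(1) inj]
  have aM: "\<And>t. cmod (a t) \<le> M" using Cons.prems p by simp
  have M: "0 \<le> M" using aM[of undefined] norm_ge_zero order_trans by blast
  have m: "(\<lambda>t. a t * u (-r + t)) \<in> l2 \<and> l2norm (\<lambda>t. a t * u (-r + t)) \<le> M * l2norm u"
    using l2_mult[OF conjunct1[OF sh] aM] sh M by (meson mult_left_mono order_trans)
  have ih: "band xs u \<in> l2 \<and> l2norm (band xs u) \<le> real (length xs) * M * l2norm u"
    using Cons p by simp
  have ad: "band (p#xs) u \<in> l2 \<and> l2norm (band (p#xs) u) \<le> l2norm (\<lambda>t. a t * u (-r + t)) + l2norm (band xs u)"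
    unfolding p band.simps by (rule l2_add[OF conjunct1[OF m] conjunct1[OF ih]])
  then show ?case using m ih by (simp add: algebra_simps)
qed

lemma band_scale: "band xs (\<lambda>t. c * u t) = (\<lambda>t. c * band xs u t)"
  by (induction xs) (auto simp: algebra_simps band_Cons)

lemma band_diff: "band xs (\<lambda>t. u t - w t) = (\<lambda>t. band xs u t - band xs w t)"
  by (induction xs) (auto simp: band_Cons algebra_simps)

lemma band_append: "band (xs @ ys) u = (\<lambda>t. band xs u t + band ys u t)"
  by (induction xs) (auto simp: algebra_simps band_Cons)

definition bscale :: "complex \<Rightarrow> ('g vec \<times> 'g) list \<Rightarrow> ('g vec \<times> 'g) list" where
  "bscale c xs = map (\<lambda>(a,r). (\<lambda>t. c * a t, r)) xs"

lemma band_bscale: "band (bscale c xs) u = (\<lambda>t. c * band xs u t)"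
  unfolding bscale_def by (induction xs) (auto simp: band_Cons algebra_simps split: prod.splits)

lemma bcoef_bscale: "bcoef xs M \<Longrightarrow> bcoef (bscale c xs) (cmod c * max M 0)"
  using bcoef_max[of xs M] unfolding bscale_def bcoef_def
  by (fastforce simp: norm_mult intro: mult_left_mono)

lemma snd_bscale: "map snd (bscale c xs) = map snd xs"
  unfolding bscale_def by (induction xs) auto

definition bpre :: "'g::group_add vec \<Rightarrow> 'g \<Rightarrow> ('g vec \<times> 'g) list \<Rightarrow> ('g vec \<times> 'g) list" where
  "bpre a r ys = map (\<lambda>(b,q). (\<lambda>t. a t * b (-r + t), r + q)) ys"

lemma band_bpre: "band (bpre a r ys) u t = a t * band ys u (-r + t)"
proof (induction ys arbitrary: t)
  case (Cons p ys)
  obtain b q where p: "p = (b,q)" by force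
  have "- (r + q) + t = - q + (- r + t)" by (simp only: minus_add add.assoc)
  then show ?case using Cons unfolding p bpre_def
    by (simp only: list.map prod.case band_Cons fst_conv snd_conv ring_distribs mult.assoc)
qed (simp add: bpre_def)

fun bprod :: "('g::group_add vec \<times> 'g) list \<Rightarrow> ('g vec \<times> 'g) list \<Rightarrow> ('g vec \<times> 'g) list" where
  "bprod [] ys = []"
| "bprod ((a,r)#xs) ys = bpre a r ys @ bprod xs ys"

lemma bprod_Cons: "bprod (p#xs) ys = bpre (fst p) (snd p) ys @ bprod xs ys"
  by (cases p) simp

lemma band_bprod: "band (bprod xs ys) u = band xs (band ys u)"
  by (induction xs ys rule: bprod.induct) (auto simp: band_append band_bpre band_Cons)

lemma bcoef_bprod:
  assumes "bcoef xs M1" "bcoef ys M2" "0 \<le> M1" "0 \<le> M2"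
  shows "bcoef (bprod xs ys) (M1 * M2)"
  using assms(1)
proof (induction xs)
  case (Cons p xs)
  obtain a r where p: "p = (a,r)" by force
  have aM: "\<And>t. cmod (a t) \<le> M1" using Cons.prems p by simp
  have "bcoef (bpre a r ys) (M1 * M2)"
    unfolding bcoef_def bpre_def
  proof (intro ballI allI)
    fix x t assume "x \<in> set (map (\<lambda>(b, q). (\<lambda>t. a t * b (- r + t), r + q)) ys)"
    then obtain b q where bq: "(b,q) \<in> set ys" "x = (\<lambda>t. a t * b (- r + t), r + q)" by auto
    have "cmod (b (-r+t)) \<le> M2" using assms(2) bq(1) unfolding bcoef_def by force
    then show "cmod (fst x t) \<le> M1 * M2" using aM[of t] assms(3,4) bq(2)
      by (simp add: norm_mult mult_mono)
  qed
  then show ?case using Cons p by (auto simp: bcoef_def)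
qed simp

definition sprodS :: "'g::group_add list \<Rightarrow> 'g list \<Rightarrow> 'g list" where
  "sprodS rs qs = concat (map (\<lambda>r. map (\<lambda>q. r + q) qs) rs)"

lemma snd_bprod: "map snd (bprod xs ys) = sprodS (map snd xs) (map snd ys)"
  by (induction xs) (auto simp: bprod_Cons sprodS_def bpre_def comp_def split: prod.splits)

lemma bdo_alg_band:
  assumes "C \<in> bdo_alg"
  shows "\<exists>xs M. C = band xs \<and> bcoef xs M"
  using assms
proof induction
  case (shift r)
  have "Lop r = band [(\<lambda>t. 1, r)]" by (intro ext) (simp add: Lop_def band_Cons)
  then show ?case by (metis bcoef_Cons bcoef_Nil norm_one order_refl)
next
  case (mult a)
  then obtain M where "\<And>t. cmod (a t) \<le> M" by (auto simp: bdd_above_def)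
  moreover have "mult_op a = band [(a, 0)]" by (intro ext) (simp add: mult_op_def band_Cons)
  ultimately show ?case by (metis bcoef_Cons bcoef_Nil)
next
  case (add A B)
  then obtain xs M1 ys M2 where "A = band xs" "bcoef xs M1" "B = band ys" "bcoef ys M2" by blast
  then have "(\<lambda>u t. A u t + B u t) = band (xs @ ys) \<and> bcoef (xs @ ys) (max M1 M2)"
    by (simp add: band_append bcoef_append fun_eq_iff)
  then show ?case by blast
next
  case (scale A c)
  then show ?case by (metis band_bscale bcoef_bscale)
next
  case (comp A B)
  then obtain xs M1 ys M2 where "A = band xs" "bcoef xs M1" "B = band ys" "bcoef ys M2" by blast
  moreover have "bcoef (bprod xs ys) (max M1 0 * max M2 0)"
    using calculation by (intro bcoef_bprod bcoef_max) auto
  ultimately show ?case by (metis band_bprod)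
qed

lemma band_bdo_alg:
  assumes "bcoef xs M"
  shows "band xs \<in> bdo_alg"
  using assms
proof (induction xs)
  case Nil
  have eq: "band [] = mult_op (\<lambda>t::'a. 0)" by (auto simp: mult_op_def)
  show ?case unfolding eq by (rule bdo_alg.mult) simp
next
  case (Cons p xs)
  obtain a r where p: "p = (a,r)" by force
  have bd: "bdd_above (range (\<lambda>t. cmod (a t)))" using Cons.prems p by (auto simp: bdd_above_def)
  have "(\<lambda>u. mult_op a (Lop r u)) \<in> bdo_alg" by (rule bdo_alg.comp[OF bdo_alg.mult[OF bd] bdo_alg.shift])
  from bdo_alg.add[OF this Cons.IH] Cons.prems p
  have "(\<lambda>u t. mult_op a (Lop r u) t + band xs u t) \<in> bdo_alg" by simp
  moreover have "(\<lambda>u t. mult_op a (Lop r u) t + band xs u t) = band (p#xs)"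
    by (auto simp: p mult_op_def Lop_def band_Cons)
  ultimately show ?case by simp
qed
lemma BDO_band_approx:
  assumes A: "A \<in> BDO" and e: "e > 0"
  obtains ys M where "bcoef ys M"
    "\<And>u. u \<in> l2 \<Longrightarrow> (\<lambda>t. A u t - band ys u t) \<in> l2 \<and> l2norm (\<lambda>t. A u t - band ys u t) \<le> e * l2norm u"
proof -
  have bA: "bounded_op_on l2 A" using A by (simp add: BDO_def)
  have Al2: "\<And>u. u \<in> l2 \<Longrightarrow> A u \<in> l2" using bA by (simp add: bounded_op_on_def)
  obtain KA where KA: "\<And>u. u \<in> l2 \<Longrightarrow> l2norm (A u) \<le> KA * l2norm u" by (rule bounded_op_bound[OF bA]) blast
  obtain C where C: "C \<in> bdo_alg" "opnorm_on l2 (op_diff A C) \<le> e" using A e unfolding BDO_def by blast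
  obtain ys M where ys: "C = band ys" "bcoef ys M" using bdo_alg_band[OF C(1)] by blast
  have "(\<lambda>t. A u t - band ys u t) \<in> l2 \<and> l2norm (\<lambda>t. A u t - band ys u t) \<le> e * l2norm u"
    if u: "u \<in> l2" for u
  proof
    show "(\<lambda>t. A u t - band ys u t) \<in> l2"
      using l2_diff[OF Al2[OF u] conjunct1[OF band_l2[OF u ys(2)]]] by blast
    have "l2norm (op_diff A C u) \<le> opnorm_on l2 (op_diff A C) * l2norm u"
    proof (rule opnorm_le[where K = "KA + real (length ys) * M"])
      show "\<And>u c. u \<in> l2 \<Longrightarrow> op_diff A C (\<lambda>t. c * u t) = (\<lambda>t. c * op_diff A C u t)"
        using bounded_op_homog[OF bA l2_zero] by (simp add: op_diff_def ys(1) band_scale algebra_simps)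
      fix w :: "'a vec" assume w: "w \<in> l2"
      have "l2norm (op_diff A C w) \<le> l2norm (A w) + l2norm (band ys w)"
        unfolding op_diff_def ys(1) using l2_diff[OF Al2[OF w] conjunct1[OF band_l2[OF w ys(2)]]] by blast
      also have "\<dots> \<le> (KA + real (length ys) * M) * l2norm w"
        using KA[OF w] band_l2[OF w ys(2)] by (simp add: algebra_simps)
      finally show "l2norm (op_diff A C w) \<le> (KA + real (length ys) * M) * l2norm w" .
    qed (use u l2_scale in auto)
    also have "\<dots> \<le> e * l2norm u" using C(2) by (simp add: mult_right_mono)
    finally show "l2norm (\<lambda>t. A u t - band ys u t) \<le> e * l2norm u" by (simp add: op_diff_def ys(1))
  qed
  with ys(2) show thesis by (rule that)
qed

definition bandL :: "'g::group_add set \<Rightarrow> ('g vec \<times> 'g) list \<Rightarrow> 'g op" where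
  "bandL Y xs u = Pop Y (band xs (Pop Y u))"

lemma bandL_l2_on:
  assumes "u \<in> l2_on Y" "bcoef xs M"
  shows "bandL Y xs u \<in> l2_on Y \<and> l2norm (bandL Y xs u) \<le> real (length xs) * M * l2norm u"
proof -
  have u: "u \<in> l2" "Pop Y u = u" using assms(1) Pop_id l2_on_l2 by auto
  note b = band_l2[OF u(1) assms(2)]
  show ?thesis unfolding bandL_def u(2)
    using Pop_l2_on[OF conjunct1[OF b]] l2_Pop[OF conjunct1[OF b], of Y] b by auto
qed

text \<open>The norm bound depends only on the number of shifts and the coefficient
  bound, hence is uniform along a sequence with common shifts.\<close>
lemma bandL_bound:
  assumes "bcoef zs M" "map snd zs = rs" "u \<in> l2_on Y"
  shows "l2norm (bandL Y zs u) \<le> real (length rs) * max M 0 * l2norm u"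
proof -
  have "length zs = length rs" using assms(2) by (metis length_map)
  then show ?thesis using bandL_l2_on[OF assms(3) bcoef_max[OF assms(1)]] by simp
qed

lemma bandL_diff: "bandL Y xs (\<lambda>t. u t - w t) = (\<lambda>t. bandL Y xs u t - bandL Y xs w t)"
proof -
  have "Pop Y (\<lambda>t. u t - w t) = (\<lambda>t. Pop Y u t - Pop Y w t)" by (auto simp: Pop_def)
  then show ?thesis unfolding bandL_def by (simp only: band_diff) (auto simp: Pop_def)
qed

lemma bandL_append: "bandL Y (xs @ ys) u = (\<lambda>t. bandL Y xs u t + bandL Y ys u t)"
  unfolding bandL_def band_append by (auto simp: Pop_def)

lemma bandL_bscale: "bandL Y (bscale c zs) u = (\<lambda>t. c * bandL Y zs u t)"
  unfolding bandL_def band_bscale by (auto simp: Pop_def)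

text \<open>Absorbing the inner projection P_Y into the coefficients makes the
  product of two compressed band operators again a compressed band operator,
  with shifts depending only on the shifts of the factors.\<close>
definition restr :: "'g::group_add set \<Rightarrow> ('g vec \<times> 'g) list \<Rightarrow> ('g vec \<times> 'g) list" where
  "restr Y xs = map (\<lambda>(a,r). (\<lambda>t. a t * (if -r + t \<in> Y then 1 else 0), r)) xs"

lemma band_restr: "band (restr Y xs) w = band xs (Pop Y w)"
  unfolding restr_def by (induction xs) (auto simp: band_Cons Pop_def split: prod.splits)

lemma bcoef_restr: "bcoef xs M \<Longrightarrow> bcoef (restr Y xs) (max M 0)"
  unfolding bcoef_def restr_def by (fastforce simp: norm_mult max.coboundedI1)

lemma snd_restr: "map snd (restr Y xs) = map snd xs"
  unfolding restr_def by (induction xs) auto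

lemma bandL_comp: "bandL Y xs (bandL Y ys u) = bandL Y (bprod (restr Y xs) ys) u"
  unfolding bandL_def band_bprod band_restr by simp

text \<open>Error of a product of approximations: S T - B1 B2 = (S - B1) T + B1 (T - B2),
  where B1 B2 is again a compressed band operator by \<open>bandL_comp\<close>.\<close>
lemma bandL_comp_error:
  assumes Tu: "T u \<in> l2_on Y" and STu: "S (T u) \<in> l2_on Y" and u: "u \<in> l2_on Y"
    and x1: "bcoef xs1 M1" "map snd xs1 = rs1" and x2: "bcoef xs2 M2"
  shows "l2norm (\<lambda>t. S (T u) t - bandL Y (bprod (restr Y xs1) xs2) u t)
      \<le> l2norm (\<lambda>t. S (T u) t - bandL Y xs1 (T u) t)
        + real (length rs1) * max M1 0 * l2norm (\<lambda>t. T u t - bandL Y xs2 u t)"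
proof -
  have d2: "(\<lambda>t. T u t - bandL Y xs2 u t) \<in> l2_on Y"
    using l2_on_diff[OF Tu conjunct1[OF bandL_l2_on[OF u x2]]] .
  have p1: "(\<lambda>t. S (T u) t - bandL Y xs1 (T u) t) \<in> l2"
    using l2_on_diff[OF STu conjunct1[OF bandL_l2_on[OF Tu x1(1)]]] l2_on_l2 by blast
  have p2: "bandL Y xs1 (\<lambda>t. T u t - bandL Y xs2 u t) \<in> l2"
    using bandL_l2_on[OF d2 x1(1)] l2_on_l2 by blast
  have eq: "(\<lambda>t. S (T u) t - bandL Y (bprod (restr Y xs1) xs2) u t) =
    (\<lambda>t. (S (T u) t - bandL Y xs1 (T u) t) + bandL Y xs1 (\<lambda>t. T u t - bandL Y xs2 u t) t)"
    unfolding bandL_comp[symmetric] bandL_diff by simp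
  show ?thesis unfolding eq using l2_add[OF p1 p2] bandL_bound[OF x1 d2] by linarith
qed

text \<open>The adjoint of a compressed band operator on the finite-dimensional space
  l2(Y) is again a compressed band operator, with negated shifts.\<close>
definition adjL :: "'g::group_add set \<Rightarrow> ('g vec \<times> 'g) list \<Rightarrow> ('g vec \<times> 'g) list" where
  "adjL Y zs = map (\<lambda>(a,r). (\<lambda>s. cnj (a (r + s)) * (if r + s \<in> Y then 1 else 0), -r)) zs"

lemma adjL_Cons:
  "adjL Y ((a,r)#zs) = (\<lambda>s. cnj (a (r + s)) * (if r + s \<in> Y then 1 else 0), -r) # adjL Y zs"
  by (simp add: adjL_def)

lemma snd_adjL: "map snd (adjL Y zs) = map uminus (map snd zs)"
  unfolding adjL_def by (induction zs) auto

lemma bcoef_adjL: "bcoef zs M \<Longrightarrow> bcoef (adjL Y zs) (max M 0)"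
  unfolding bcoef_def adjL_def by (fastforce simp: norm_mult max.coboundedI1)

text \<open>Adjoint of a single term a L_r, by the substitution t \<mapsto> r + t on Y.\<close>
lemma single_term_adjoint:
  fixes r :: "'g::group_add"
  assumes Y: "finite Y"
  shows "(\<Sum>t\<in>Y. a t * Pop Y u (-r + t) * cnj (w t)) =
         (\<Sum>t\<in>Y. u t * cnj (cnj (a (r + t)) * (if r + t \<in> Y then 1 else 0) * Pop Y w (- (- r) + t)))"
proof -
  define F where "F t = (if t \<in> Y \<and> -r + t \<in> Y then a t * u (-r + t) * cnj (w t) else 0)" for t
  have l: "(\<Sum>t\<in>Y. a t * Pop Y u (-r + t) * cnj (w t)) = (\<Sum>t\<in>Y. F t)"
    by (rule sum.cong) (auto simp: F_def Pop_def)
  have "(\<Sum>t\<in>Y. u t * cnj (cnj (a (r + t)) * (if r + t \<in> Y then 1 else 0) * Pop Y w (- (- r) + t))) =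
        (\<Sum>t\<in>Y. F (r + t))"
    by (rule sum.cong) (auto simp: F_def Pop_def minus_add_cancel)
  also have "\<dots> = (\<Sum>t\<in>(\<lambda>s. r + s) ` Y. F t)"
    by (rule sum.reindex[symmetric, unfolded comp_def]) (auto simp: inj_on_def)
  also have "\<dots> = (\<Sum>t\<in>Y. F t)"
  proof (rule sum.mono_neutral_cong)
    show "finite ((\<lambda>s. r + s) ` Y)" "finite Y" using Y by auto
    show "F i = 0" if "i \<in> Y - (\<lambda>s. r + s) ` Y" for i
    proof -
      have "-r + i \<notin> Y"
      proof
        assume "-r + i \<in> Y"
        then have "r + (-r + i) \<in> (\<lambda>s. r + s) ` Y" by blast
        then show False using that by (simp add: add.assoc[symmetric])
      qed
      then show ?thesis by (simp add: F_def)
    qed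
    show "F i = 0" if "i \<in> (\<lambda>s. r + s) ` Y - Y" for i using that by (simp add: F_def)
  qed simp
  finally show ?thesis using l by simp
qed

lemma bandL_adjoint:
  assumes Y: "finite Y"
  shows "(\<Sum>t\<in>Y. bandL Y zs u t * cnj (w t)) = (\<Sum>t\<in>Y. u t * cnj (bandL Y (adjL Y zs) w t))"
proof -
  have "(\<Sum>t\<in>Y. band zs (Pop Y u) t * cnj (w t)) = (\<Sum>t\<in>Y. u t * cnj (band (adjL Y zs) (Pop Y w) t))"
  proof (induction zs)
    case Nil then show ?case by (simp add: adjL_def)
  next
    case (Cons z zs)
    obtain a r where z: "z = (a,r)" by force
    have "(\<Sum>t\<in>Y. band (z#zs) (Pop Y u) t * cnj (w t)) =
      (\<Sum>t\<in>Y. a t * Pop Y u (-r + t) * cnj (w t)) + (\<Sum>t\<in>Y. band zs (Pop Y u) t * cnj (w t))"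
      by (simp add: z band_Cons sum.distrib ring_distribs)
    also have "\<dots> = (\<Sum>t\<in>Y. u t * cnj (cnj (a (r + t)) * (if r + t \<in> Y then 1 else 0) * Pop Y w (- (- r) + t)))
        + (\<Sum>t\<in>Y. u t * cnj (band (adjL Y zs) (Pop Y w) t))"
      using single_term_adjoint[OF Y] Cons.IH by simp
    also have "\<dots> = (\<Sum>t\<in>Y. u t * cnj (band (adjL Y (z#zs)) (Pop Y w) t))"
      by (simp only: z adjL_Cons band_Cons fst_conv snd_conv sum.distrib[symmetric] ring_distribs complex_cnj_add)
    finally show ?case .
  qed
  moreover have "\<And>t. t \<in> Y \<Longrightarrow> bandL Y zs u t = band zs (Pop Y u) t"
    "\<And>t. t \<in> Y \<Longrightarrow> bandL Y (adjL Y zs) w t = band (adjL Y zs) (Pop Y w) t"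
    by (auto simp: bandL_def Pop_def)
  ultimately show ?thesis by (metis (no_types, lifting) sum.cong)
qed

section \<open>Adjoints on l2(Y) for finite Y\<close>

lemma adjoint_swap:
  assumes Y: "finite Y" and adj: "adjoint_on Y B S" and x: "x \<in> l2_on Y" and y: "y \<in> l2_on Y"
  shows "(\<Sum>t\<in>Y. B x t * cnj (y t)) = (\<Sum>t\<in>Y. x t * cnj (S y t))"
proof -
  have Bx: "B x \<in> l2_on Y" using adj x by (auto simp: adjoint_on_def)
  have "(\<Sum>t\<in>Y. B x t * cnj (y t)) = cnj (l2inner y (B x))"
    using l2inner_finite[OF Y, of "B x" y] Bx cnj_swap by (auto simp: l2_on_def)
  also have "l2inner y (B x) = l2inner (S y) x" using adj x y by (auto simp: adjoint_on_def)
  also have "\<dots> = (\<Sum>t\<in>Y. S y t * cnj (x t))" using l2inner_finite[OF Y, of x "S y"] x by (auto simp: l2_on_def)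
  finally show ?thesis using cnj_swap by metis
qed

text \<open>If the compressed band operator with coefficients zs approximates S within e,
  then its adjoint approximates the adjoint B of S within e: for z = B u - (band)^* u
  one has |z|^2 = \<langle>u, (S - band) z\<rangle> \<le> e |u| |z|.\<close>
lemma adjoint_band_approx:
  assumes Y: "finite Y" and adj: "adjoint_on Y B S"
    and Sl: "\<And>x. x \<in> l2_on Y \<Longrightarrow> S x \<in> l2_on Y"
    and bd: "\<And>x. x \<in> l2_on Y \<Longrightarrow> l2norm (\<lambda>t. S x t - bandL Y zs x t) \<le> e * l2norm x"
    and M: "bcoef zs M" and e: "0 \<le> e" and u: "u \<in> l2_on Y"
  shows "l2norm (\<lambda>t. B u t - bandL Y (adjL Y zs) u t) \<le> e * l2norm u"
proof -
  define N where "N x = L2_set (\<lambda>t. cmod (x t)) Y" for x :: "'a vec"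
  have Bu: "B u \<in> l2_on Y" using adj u by (auto simp: adjoint_on_def)
  have Au: "bandL Y (adjL Y zs) u \<in> l2_on Y" using bandL_l2_on[OF u bcoef_adjL[OF M]] by blast
  define z where "z = (\<lambda>t. B u t - bandL Y (adjL Y zs) u t)"
  have z: "z \<in> l2_on Y" unfolding z_def by (rule l2_on_diff[OF Bu Au])
  have Sz: "S z \<in> l2_on Y" using Sl[OF z] .
  have Bz: "bandL Y zs z \<in> l2_on Y" using bandL_l2_on[OF z M] by blast
  define d where "d = (\<lambda>t. S z t - bandL Y zs z t)"
  have d: "d \<in> l2_on Y" unfolding d_def by (rule l2_on_diff[OF Sz Bz])
  have "(\<Sum>t\<in>Y. z t * cnj (z t)) = (\<Sum>t\<in>Y. B u t * cnj (z t) - bandL Y (adjL Y zs) u t * cnj (z t))"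
    by (rule sum.cong) (simp_all add: z_def algebra_simps)
  also have "\<dots> = (\<Sum>t\<in>Y. B u t * cnj (z t)) - (\<Sum>t\<in>Y. bandL Y (adjL Y zs) u t * cnj (z t))"
    by (rule sum_subtractf)
  also have "(\<Sum>t\<in>Y. B u t * cnj (z t)) = (\<Sum>t\<in>Y. u t * cnj (S z t))" by (rule adjoint_swap[OF Y adj u z])
  also have "(\<Sum>t\<in>Y. bandL Y (adjL Y zs) u t * cnj (z t)) = (\<Sum>t\<in>Y. u t * cnj (bandL Y zs z t))"
    using bandL_adjoint[OF Y, of zs z u] cnj_swap by metis
  also have "(\<Sum>t\<in>Y. u t * cnj (S z t)) - (\<Sum>t\<in>Y. u t * cnj (bandL Y zs z t)) = (\<Sum>t\<in>Y. u t * cnj (d t))"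
    unfolding d_def by (simp add: sum_subtractf[symmetric] ring_distribs)
  finally have eq: "(\<Sum>t\<in>Y. z t * cnj (z t)) = (\<Sum>t\<in>Y. u t * cnj (d t))" .
  have "(N z)^2 = cmod (\<Sum>t\<in>Y. z t * cnj (z t))" unfolding sum_self_inner N_def by (simp add: norm_power)
  also have "\<dots> \<le> N u * N d" unfolding eq N_def by (rule cauchy_schwarz_finite)
  also have "N d \<le> e * N z" using bd[OF z] l2norm_finite[OF Y] z d u unfolding N_def d_def by simp
  then have "N u * N d \<le> N u * (e * N z)" by (rule mult_left_mono) (simp add: N_def L2_set_nonneg)
  finally have ineq: "(N z)^2 \<le> N u * (e * N z)" .
  have "N z \<le> e * N u"
  proof (cases "N z = 0")
    case True then show ?thesis using e by (simp add: N_def L2_set_nonneg)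
  next
    case False
    then have "0 < N z" using L2_set_nonneg[of _ Y] unfolding N_def by (metis less_eq_real_def)
    then show ?thesis using ineq by (simp add: power2_eq_square algebra_simps)
  qed
  then show ?thesis using l2norm_finite[OF Y z] l2norm_finite[OF Y u] unfolding N_def z_def by simp
qed

lemma adjoint_homog:
  assumes Y: "finite Y" and adj: "adjoint_on Y B S"
    and Sl: "\<And>x. x \<in> l2_on Y \<Longrightarrow> S x \<in> l2_on Y" and u: "u \<in> l2_on Y"
  shows "B (\<lambda>t. c * u t) = (\<lambda>t. c * B u t)"
proof -
  have cu: "(\<lambda>t. c * u t) \<in> l2_on Y" using l2_on_scale[OF u] .
  have B1: "B (\<lambda>t. c * u t) \<in> l2_on Y" and B2: "B u \<in> l2_on Y" using adj u cu by (auto simp: adjoint_on_def)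
  define z where "z = (\<lambda>t. B (\<lambda>t. c * u t) t - c * B u t)"
  have z: "z \<in> l2_on Y" unfolding z_def by (rule l2_on_diff[OF B1 l2_on_scale[OF B2]])
  have "(\<Sum>t\<in>Y. z t * cnj (z t)) = (\<Sum>t\<in>Y. B (\<lambda>t. c * u t) t * cnj (z t) - c * (B u t * cnj (z t)))"
    by (rule sum.cong) (simp_all add: z_def algebra_simps)
  also have "\<dots> = (\<Sum>t\<in>Y. B (\<lambda>t. c * u t) t * cnj (z t)) - c * (\<Sum>t\<in>Y. B u t * cnj (z t))"
    by (simp add: sum_subtractf sum_distrib_left)
  also have "\<dots> = (\<Sum>t\<in>Y. c * u t * cnj (S z t)) - c * (\<Sum>t\<in>Y. u t * cnj (S z t))"
    using adjoint_swap[OF Y adj cu z] adjoint_swap[OF Y adj u z] by simp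
  also have "\<dots> = 0" by (simp add: sum_distrib_left mult.assoc)
  finally have "complex_of_real ((L2_set (\<lambda>t. cmod (z t)) Y)^2) = 0" unfolding sum_self_inner .
  then have "l2norm z = 0" using l2norm_finite[OF Y z] by simp
  then have "z = (\<lambda>t. 0)" using l2_zero_iff l2_on_l2[OF z] by blast
  then show ?thesis unfolding z_def by (metis (no_types, lifting) eq_iff_diff_eq_0)
qed

section \<open>Sequences uniformly approximable by compressed band operators\<close>

text \<open>This uniformity
  is what allows the pieces to be glued into one band operator on l2(\<Gamma>).\<close>
definition band_approx ::
  "(nat \<Rightarrow> 'g::group_add set) \<Rightarrow> (nat \<Rightarrow> 'g op) \<Rightarrow> real \<Rightarrow> (nat \<Rightarrow> ('g vec \<times> 'g) list) \<Rightarrow> bool" where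
  "band_approx Y S e xs \<longleftrightarrow> (\<exists>rs M. (\<forall>n. map snd (xs n) = rs) \<and> (\<forall>n. bcoef (xs n) M) \<and>
     (\<forall>n u. u \<in> l2_on (Y n) \<longrightarrow> l2norm (\<lambda>t. S n u t - bandL (Y n) (xs n) u t) \<le> e * l2norm u))"

lemma band_approxI:
  assumes "\<And>n. map snd (xs n) = rs" "\<And>n. bcoef (xs n) M"
    "\<And>n u. u \<in> l2_on (Y n) \<Longrightarrow> l2norm (\<lambda>t. S n u t - bandL (Y n) (xs n) u t) \<le> e * l2norm u"
  shows "band_approx Y S e xs"
  using assms unfolding band_approx_def by blast

lemma band_approxE:
  assumes "band_approx Y S e xs"
  obtains rs M where "\<And>n. map snd (xs n) = rs" "\<And>n. bcoef (xs n) M"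
    "\<And>n u. u \<in> l2_on (Y n) \<Longrightarrow> l2norm (\<lambda>t. S n u t - bandL (Y n) (xs n) u t) \<le> e * l2norm u"
proof -
  from assms obtain rs M where "\<forall>n. map snd (xs n) = rs" "\<forall>n. bcoef (xs n) M"
    "\<forall>n u. u \<in> l2_on (Y n) \<longrightarrow> l2norm (\<lambda>t. S n u t - bandL (Y n) (xs n) u t) \<le> e * l2norm u"
    unfolding band_approx_def by blast
  then show thesis using that by blast
qed

definition band_approximable :: "(nat \<Rightarrow> 'g::group_add set) \<Rightarrow> (nat \<Rightarrow> 'g op) \<Rightarrow> bool" where
  "band_approximable Y S \<longleftrightarrow> (\<forall>n u. u \<in> l2_on (Y n) \<longrightarrow> S n u \<in> l2_on (Y n)) \<and>
     (\<forall>n u c. u \<in> l2_on (Y n) \<longrightarrow> S n (\<lambda>t. c * u t) = (\<lambda>t. c * S n u t)) \<and>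
     (\<forall>e>0. \<exists>xs. band_approx Y S e xs)"

lemma band_approximableI:
  assumes "\<And>n u. u \<in> l2_on (Y n) \<Longrightarrow> S n u \<in> l2_on (Y n)"
    and "\<And>n u c. u \<in> l2_on (Y n) \<Longrightarrow> S n (\<lambda>t. c * u t) = (\<lambda>t. c * S n u t)"
    and "\<And>e. e > 0 \<Longrightarrow> \<exists>xs. band_approx Y S e xs"
  shows "band_approximable Y S"
  using assms unfolding band_approximable_def by blast

lemma band_approximableD:
  assumes "band_approximable Y S"
  shows "\<And>n u. u \<in> l2_on (Y n) \<Longrightarrow> S n u \<in> l2_on (Y n)"
    and "\<And>n u c. u \<in> l2_on (Y n) \<Longrightarrow> S n (\<lambda>t. c * u t) = (\<lambda>t. c * S n u t)"
    and "\<And>e. e > 0 \<Longrightarrow> \<exists>xs. band_approx Y S e xs"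
  using assms unfolding band_approximable_def by blast+

lemma band_approximableE:
  assumes "band_approximable Y S" "e > 0"
  obtains xs rs M where "\<And>n. map snd (xs n) = rs" "\<And>n. bcoef (xs n) M"
    "\<And>n u. u \<in> l2_on (Y n) \<Longrightarrow> l2norm (\<lambda>t. S n u t - bandL (Y n) (xs n) u t) \<le> e * l2norm u"
proof -
  obtain xs where "band_approx Y S e xs" using band_approximableD(3)[OF assms] by blast
  then obtain rs M where r: "\<And>n. map snd (xs n) = rs" "\<And>n. bcoef (xs n) M"
    "\<And>n u. u \<in> l2_on (Y n) \<Longrightarrow> l2norm (\<lambda>t. S n u t - bandL (Y n) (xs n) u t) \<le> e * l2norm u"
    by (rule band_approxE) blast
  show thesis by (rule that[OF r])
qed

text \<open>An approximable sequence is uniformly bounded: it is within 1 of a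
  sequence of compressed band operators with uniformly bounded norms.\<close>
lemma band_approximable_bound:
  assumes "band_approximable Y S"
  obtains K where "0 \<le> K" "\<And>n u. u \<in> l2_on (Y n) \<Longrightarrow> l2norm (S n u) \<le> K * l2norm u"
proof -
  obtain xs rs M where xs: "\<And>n. map snd (xs n) = rs" "\<And>n. bcoef (xs n) M"
    "\<And>n u. u \<in> l2_on (Y n) \<Longrightarrow> l2norm (\<lambda>t. S n u t - bandL (Y n) (xs n) u t) \<le> 1 * l2norm u"
    by (rule band_approximableE[OF assms zero_less_one]) blast
  define K where "K = 1 + real (length rs) * max M 0"
  have "l2norm (S n u) \<le> K * l2norm u" if u: "u \<in> l2_on (Y n)" for n u
  proof -
    have Su: "S n u \<in> l2" using band_approximableD(1)[OF assms u] l2_on_l2 by blast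
    have Bu: "bandL (Y n) (xs n) u \<in> l2" using bandL_l2_on[OF u xs(2)] l2_on_l2 by blast
    have "l2norm (S n u) \<le> l2norm (\<lambda>t. S n u t - bandL (Y n) (xs n) u t) + l2norm (bandL (Y n) (xs n) u)"
      by (rule l2_triangle[OF Su Bu])
    also have "\<dots> \<le> 1 * l2norm u + real (length rs) * max M 0 * l2norm u"
      using xs(3)[OF u] bandL_bound[OF xs(2)[of n] xs(1)[of n] u] by linarith
    finally show ?thesis by (simp add: K_def algebra_simps)
  qed
  moreover have "0 \<le> K" unfolding K_def by simp
  ultimately show ?thesis using that by blast
qed

lemma band_approx_perturb:
  assumes S: "band_approx Y S e xs"
    and Sl: "\<And>n u. u \<in> l2_on (Y n) \<Longrightarrow> S n u \<in> l2_on (Y n)"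
    and Fl: "\<And>n u. u \<in> l2_on (Y n) \<Longrightarrow> F n u \<in> l2_on (Y n)"
    and d: "\<And>n u. u \<in> l2_on (Y n) \<Longrightarrow> l2norm (\<lambda>t. F n u t - S n u t) \<le> d * l2norm u"
  shows "band_approx Y F (d + e) xs"
proof -
  obtain rs M where xs: "\<And>n. map snd (xs n) = rs" "\<And>n. bcoef (xs n) M"
    "\<And>n u. u \<in> l2_on (Y n) \<Longrightarrow> l2norm (\<lambda>t. S n u t - bandL (Y n) (xs n) u t) \<le> e * l2norm u"
    using S by (rule band_approxE) blast
  show ?thesis
  proof (rule band_approxI[OF xs(1,2)])
    fix n u assume u: "u \<in> l2_on (Y n)"
    have FS: "(\<lambda>t. F n u t - S n u t) \<in> l2" using l2_on_diff[OF Fl[OF u] Sl[OF u]] l2_on_l2 by blast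
    have SB: "(\<lambda>t. S n u t - bandL (Y n) (xs n) u t) \<in> l2"
      using l2_on_diff[OF Sl[OF u] conjunct1[OF bandL_l2_on[OF u xs(2)]]] l2_on_l2 by blast
    have "l2norm (\<lambda>t. F n u t - bandL (Y n) (xs n) u t)
        \<le> l2norm (\<lambda>t. F n u t - S n u t) + l2norm (\<lambda>t. S n u t - bandL (Y n) (xs n) u t)"
      using conjunct2[OF l2_add[OF FS SB]] by simp
    then show "l2norm (\<lambda>t. F n u t - bandL (Y n) (xs n) u t) \<le> (d + e) * l2norm u"
      using d[OF u] xs(3)[OF u] by (simp add: algebra_simps)
  qed
qed

text \<open>Approximating A by a band operator in operator norm gives one coefficient
  list that works for every n, since compressing does not increase norms.\<close>
lemma compression_band_approximable:
  assumes A: "A \<in> BDO"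
  shows "band_approximable Y (\<lambda>n u. Pop (Y n) (A (Pop (Y n) u)))"
proof -
  have bA: "bounded_op_on l2 A" using A by (simp add: BDO_def)
  have Al: "Pop (Y n) (A (Pop (Y n) u)) \<in> l2_on (Y n)" if "u \<in> l2_on (Y n)" for n u
    using that bA Pop_id Pop_l2_on l2_on_l2 unfolding bounded_op_on_def by metis
  show ?thesis
  proof (rule band_approximableI[OF Al])
    show "Pop (Y n) (A (Pop (Y n) (\<lambda>t. c * u t))) = (\<lambda>t. c * Pop (Y n) (A (Pop (Y n) u)) t)"
      if u: "u \<in> l2_on (Y n)" for n u c
      using bounded_op_homog[OF bA l2_zero l2_on_l2[OF u]] Pop_id[OF u] Pop_id[OF l2_on_scale[OF u]]
      by (simp add: Pop_def fun_eq_iff)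
  next
    fix e :: real assume e: "e > 0"
    obtain ys M where ys: "bcoef ys M" and AC:
      "\<And>u. u \<in> l2 \<Longrightarrow> (\<lambda>t. A u t - band ys u t) \<in> l2 \<and> l2norm (\<lambda>t. A u t - band ys u t) \<le> e * l2norm u"
      by (rule BDO_band_approx[OF A e]) blast
    have "band_approx Y (\<lambda>n. bandL (Y n) ys) 0 (\<lambda>n. ys)"
      by (rule band_approxI[where rs = "map snd ys" and M = M]) (simp_all add: ys)
    then have "band_approx Y (\<lambda>n u. Pop (Y n) (A (Pop (Y n) u))) (e + 0) (\<lambda>n. ys)"
    proof (rule band_approx_perturb[OF _ _ Al])
      show "bandL (Y n) ys u \<in> l2_on (Y n)" if "u \<in> l2_on (Y n)" for n u
        using bandL_l2_on[OF that ys] by blast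
      fix n u assume u: "u \<in> l2_on (Y n)"
      have "(\<lambda>t. Pop (Y n) (A (Pop (Y n) u)) t - bandL (Y n) ys u t) = Pop (Y n) (\<lambda>t. A u t - band ys u t)"
        unfolding bandL_def Pop_id[OF u] by (auto simp: Pop_def)
      then show "l2norm (\<lambda>t. Pop (Y n) (A (Pop (Y n) u)) t - bandL (Y n) ys u t) \<le> e * l2norm u"
        using l2_Pop[of "\<lambda>t. A u t - band ys u t" "Y n"] AC[OF l2_on_l2[OF u]] by simp
    qed
    then show "\<exists>xs. band_approx Y (\<lambda>n u. Pop (Y n) (A (Pop (Y n) u))) e xs" by auto
  qed
qed

section \<open>Closure properties and the algebra S_Y(BDO)\<close>

text \<open>Sums: concatenate the coefficient lists of e/2-approximations.\<close>
lemma band_approximable_add: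
  assumes S: "band_approximable Y S" and T: "band_approximable Y T"
  shows "band_approximable Y (\<lambda>n u t. S n u t + T n u t)"
proof (rule band_approximableI)
  note S1 = band_approximableD(1)[OF S] and T1 = band_approximableD(1)[OF T]
  show "(\<lambda>t. S n u t + T n u t) \<in> l2_on (Y n)" if "u \<in> l2_on (Y n)" for n u
    using S1 T1 l2_on_add that by blast
  show "(\<lambda>t. S n (\<lambda>t. c * u t) t + T n (\<lambda>t. c * u t) t) = (\<lambda>t. c * (S n u t + T n u t))"
    if "u \<in> l2_on (Y n)" for n u c
    using band_approximableD(2)[OF S that] band_approximableD(2)[OF T that] by (simp add: algebra_simps)
next
  note S1 = band_approximableD(1)[OF S] and T1 = band_approximableD(1)[OF T]
  fix e :: real assume e: "e > 0"
  obtain xs1 rs1 M1 where x1: "\<And>n. map snd (xs1 n) = rs1" "\<And>n. bcoef (xs1 n) M1"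
    "\<And>n u. u \<in> l2_on (Y n) \<Longrightarrow> l2norm (\<lambda>t. S n u t - bandL (Y n) (xs1 n) u t) \<le> e/2 * l2norm u"
    using band_approximableE[OF S, of "e/2"] e by auto
  obtain xs2 rs2 M2 where x2: "\<And>n. map snd (xs2 n) = rs2" "\<And>n. bcoef (xs2 n) M2"
    "\<And>n u. u \<in> l2_on (Y n) \<Longrightarrow> l2norm (\<lambda>t. T n u t - bandL (Y n) (xs2 n) u t) \<le> e/2 * l2norm u"
    using band_approximableE[OF T, of "e/2"] e by auto
  have "band_approx Y (\<lambda>n u t. S n u t + T n u t) e (\<lambda>n. xs1 n @ xs2 n)"
  proof (rule band_approxI)
    show "map snd (xs1 n @ xs2 n) = rs1 @ rs2" for n using x1 x2 by simp
    show "bcoef (xs1 n @ xs2 n) (max M1 M2)" for n by (rule bcoef_append[OF x1(2) x2(2)])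
    fix n u assume u: "u \<in> l2_on (Y n)"
    have a: "(\<lambda>t. S n u t - bandL (Y n) (xs1 n) u t) \<in> l2"
      using l2_on_diff[OF S1[OF u] conjunct1[OF bandL_l2_on[OF u x1(2)]]] l2_on_l2 by blast
    have b: "(\<lambda>t. T n u t - bandL (Y n) (xs2 n) u t) \<in> l2"
      using l2_on_diff[OF T1[OF u] conjunct1[OF bandL_l2_on[OF u x2(2)]]] l2_on_l2 by blast
    have eq: "(\<lambda>t. (S n u t + T n u t) - bandL (Y n) (xs1 n @ xs2 n) u t) =
       (\<lambda>t. (S n u t - bandL (Y n) (xs1 n) u t) + (T n u t - bandL (Y n) (xs2 n) u t))"
      unfolding bandL_append by (simp add: algebra_simps)
    show "l2norm (\<lambda>t. (S n u t + T n u t) - bandL (Y n) (xs1 n @ xs2 n) u t) \<le> e * l2norm u"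
      unfolding eq using l2_add[OF a b] x1(3)[OF u] x2(3)[OF u] by (simp add: algebra_simps)
  qed
  then show "\<exists>xs. band_approx Y (\<lambda>n u t. S n u t + T n u t) e xs" by blast
qed

text \<open>Scalar multiples: scale an e/(|c|+1)-approximation.\<close>
lemma band_approximable_scale:
  assumes S: "band_approximable Y S"
  shows "band_approximable Y (\<lambda>n u t. c * S n u t)"
proof (rule band_approximableI)
  show "(\<lambda>t. c * S n u t) \<in> l2_on (Y n)" if "u \<in> l2_on (Y n)" for n u
    using band_approximableD(1)[OF S that] l2_on_scale by blast
  show "(\<lambda>t. c * S n (\<lambda>t. c' * u t) t) = (\<lambda>t. c' * (c * S n u t))" if "u \<in> l2_on (Y n)" for n u c'
    using band_approximableD(2)[OF S that] by (simp add: algebra_simps)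
next
  fix e :: real assume e: "e > 0"
  define e' where "e' = e / (cmod c + 1)"
  have p: "0 < cmod c + 1" using norm_ge_zero[of c] by linarith
  have e'p: "e' > 0" unfolding e'_def using e p by simp
  have "cmod c * e' \<le> (cmod c + 1) * e'" using e'p by (simp add: mult_right_mono)
  also have "\<dots> = e" unfolding e'_def using p by simp
  finally have ce': "cmod c * e' \<le> e" .
  obtain xs rs M where x: "\<And>n. map snd (xs n) = rs" "\<And>n. bcoef (xs n) M"
    "\<And>n u. u \<in> l2_on (Y n) \<Longrightarrow> l2norm (\<lambda>t. S n u t - bandL (Y n) (xs n) u t) \<le> e' * l2norm u"
    by (rule band_approximableE[OF S e'p]) blast
  have "band_approx Y (\<lambda>n u t. c * S n u t) e (\<lambda>n. bscale c (xs n))"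
  proof (rule band_approxI)
    show "map snd (bscale c (xs n)) = rs" for n using x(1) by (simp add: snd_bscale)
    show "bcoef (bscale c (xs n)) (cmod c * max M 0)" for n by (rule bcoef_bscale[OF x(2)])
    fix n u assume u: "u \<in> l2_on (Y n)"
    have eq: "(\<lambda>t. c * S n u t - bandL (Y n) (bscale c (xs n)) u t)
        = (\<lambda>t. c * (S n u t - bandL (Y n) (xs n) u t))"
      unfolding bandL_bscale by (simp add: algebra_simps)
    have "l2norm (\<lambda>t. c * (S n u t - bandL (Y n) (xs n) u t)) \<le> cmod c * (e' * l2norm u)"
      unfolding l2norm_scale using x(3)[OF u] by (simp add: mult_left_mono)
    also have "\<dots> \<le> e * l2norm u" using ce' by (simp add: mult_right_mono mult.assoc[symmetric])
    finally show "l2norm (\<lambda>t. c * S n u t - bandL (Y n) (bscale c (xs n)) u t) \<le> e * l2norm u"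
      unfolding eq .
  qed
  then show "\<exists>xs. band_approx Y (\<lambda>n u t. c * S n u t) e xs" by blast
qed

text \<open>Products: by \<open>bandL_comp_error\<close>, the two error terms are controlled by
  the uniform bound of T and the uniform bound of the first approximant.\<close>
lemma band_approximable_comp:
  assumes S: "band_approximable Y S" and T: "band_approximable Y T"
  shows "band_approximable Y (\<lambda>n u. S n (T n u))"
proof (rule band_approximableI)
  note S1 = band_approximableD(1)[OF S] and T1 = band_approximableD(1)[OF T]
  show "S n (T n u) \<in> l2_on (Y n)" if "u \<in> l2_on (Y n)" for n u using S1 T1 that by blast
  show "S n (T n (\<lambda>t. c * u t)) = (\<lambda>t. c * S n (T n u) t)" if "u \<in> l2_on (Y n)" for n u c
    using band_approximableD(2)[OF S T1[OF that]] band_approximableD(2)[OF T that] by simp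
next
  note S1 = band_approximableD(1)[OF S] and T1 = band_approximableD(1)[OF T]
  fix e :: real assume e: "e > 0"
  obtain KT where KT: "0 \<le> KT" "\<And>n u. u \<in> l2_on (Y n) \<Longrightarrow> l2norm (T n u) \<le> KT * l2norm u"
    by (rule band_approximable_bound[OF T]) blast
  define e1 where "e1 = e / (2 * (KT + 1))"
  have e1: "e1 > 0" "e1 * KT \<le> e / 2" using e KT(1) by (auto simp: e1_def field_simps)
  obtain xs1 rs1 M1 where x1: "\<And>n. map snd (xs1 n) = rs1" "\<And>n. bcoef (xs1 n) M1"
    "\<And>n u. u \<in> l2_on (Y n) \<Longrightarrow> l2norm (\<lambda>t. S n u t - bandL (Y n) (xs1 n) u t) \<le> e1 * l2norm u"
    by (rule band_approximableE[OF S e1(1)]) blast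
  define K1 where "K1 = real (length rs1) * max M1 0"
  have K1: "0 \<le> K1" unfolding K1_def by simp
  define e2 where "e2 = e / (2 * (K1 + 1))"
  have e2: "e2 > 0" "K1 * e2 \<le> e / 2" using e K1 by (auto simp: e2_def field_simps)
  obtain xs2 rs2 M2 where x2: "\<And>n. map snd (xs2 n) = rs2" "\<And>n. bcoef (xs2 n) M2"
    "\<And>n u. u \<in> l2_on (Y n) \<Longrightarrow> l2norm (\<lambda>t. T n u t - bandL (Y n) (xs2 n) u t) \<le> e2 * l2norm u"
    by (rule band_approximableE[OF T e2(1)]) blast
  define zs where "zs n = bprod (restr (Y n) (xs1 n)) (xs2 n)" for n
  have "band_approx Y (\<lambda>n u. S n (T n u)) e zs"
  proof (rule band_approxI)
    show "map snd (zs n) = sprodS rs1 rs2" for n unfolding zs_def snd_bprod snd_restr x1(1) x2(1) ..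
    show "bcoef (zs n) (max M1 0 * max M2 0)" for n unfolding zs_def
      by (rule bcoef_bprod[OF bcoef_restr[OF x1(2)] bcoef_max[OF x2(2)]]) auto
    fix n u assume u: "u \<in> l2_on (Y n)"
    have Tu: "T n u \<in> l2_on (Y n)" using T1[OF u] .
    have "l2norm (\<lambda>t. S n (T n u) t - bandL (Y n) (zs n) u t)
        \<le> l2norm (\<lambda>t. S n (T n u) t - bandL (Y n) (xs1 n) (T n u) t)
          + K1 * l2norm (\<lambda>t. T n u t - bandL (Y n) (xs2 n) u t)"
      unfolding zs_def K1_def
      by (rule bandL_comp_error[where T = "T n" and S = "S n", OF Tu S1[OF Tu] u x1(2,1) x2(2)])
    also have "\<dots> \<le> e1 * (KT * l2norm u) + K1 * (e2 * l2norm u)"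
      using x1(3)[OF Tu] x2(3)[OF u] KT(2)[OF u] e1(1) K1
      by (intro add_mono mult_left_mono) (auto intro: order_trans mult_left_mono)
    also have "\<dots> \<le> e * l2norm u"
      using mult_right_mono[OF e1(2) l2norm_ge0[of u]] mult_right_mono[OF e2(2) l2norm_ge0[of u]]
      by (simp add: algebra_simps)
    finally show "l2norm (\<lambda>t. S n (T n u) t - bandL (Y n) (zs n) u t) \<le> e * l2norm u" .
  qed
  then show "\<exists>xs. band_approx Y (\<lambda>n u. S n (T n u)) e xs" by blast
qed

text \<open>Adjoints: by \<open>adjoint_band_approx\<close>, the adjoints of the coefficient lists
  approximate the adjoint sequence, and they still share their shifts.\<close>
lemma band_approximable_adjoint:
  assumes Y: "\<And>n. finite (Y n)" and S: "band_approximable Y S"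
    and adj: "\<And>n. adjoint_on (Y n) (B n) (S n)"
  shows "band_approximable Y B"
proof (rule band_approximableI)
  note S1 = band_approximableD(1)[OF S]
  show "B n u \<in> l2_on (Y n)" if "u \<in> l2_on (Y n)" for n u
    using adj that by (auto simp: adjoint_on_def)
  show "B n (\<lambda>t. c * u t) = (\<lambda>t. c * B n u t)" if "u \<in> l2_on (Y n)" for n u c
    using adjoint_homog[OF Y adj S1 that] .
  fix e :: real assume e: "e > 0"
  obtain xs rs M where x: "\<And>n. map snd (xs n) = rs" "\<And>n. bcoef (xs n) M"
    "\<And>n u. u \<in> l2_on (Y n) \<Longrightarrow> l2norm (\<lambda>t. S n u t - bandL (Y n) (xs n) u t) \<le> e * l2norm u"
    by (rule band_approximableE[OF S e]) blast
  have "band_approx Y B e (\<lambda>n. adjL (Y n) (xs n))"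
  proof (rule band_approxI)
    show "map snd (adjL (Y n) (xs n)) = map uminus rs" for n unfolding snd_adjL x(1) ..
    show "bcoef (adjL (Y n) (xs n)) (max M 0)" for n by (rule bcoef_adjL[OF x(2)])
    show "l2norm (\<lambda>t. B n u t - bandL (Y n) (adjL (Y n) (xs n)) u t) \<le> e * l2norm u"
      if "u \<in> l2_on (Y n)" for n u
      by (rule adjoint_band_approx[OF Y adj S1 x(3) x(2)]) (use e that in auto)
  qed
  then show "\<exists>xs. band_approx Y B e xs" by blast
qed

lemma sy_alg_band_approximable:
  assumes "S \<in> sy_alg Y" "\<And>n. finite (Y n)"
  shows "band_approximable Y S"
  using assms(1)
proof induction
  case (gen A) then show ?case by (rule compression_band_approximable)
next
  case (add S T) from add.IH show ?case by (rule band_approximable_add)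
next
  case (scale S c) from scale.IH show ?case by (rule band_approximable_scale)
next
  case (comp S T) from comp.IH show ?case by (rule band_approximable_comp)
next
  case (adj S B) then show ?case using band_approximable_adjoint[of Y S B] assms(2) by blast
qed

lemma FY_uniform_bound:
  assumes "A \<in> FY Y"
  obtains K where "0 \<le> K" "\<And>n x. x \<in> l2_on (Y n) \<Longrightarrow> l2norm (A n x) \<le> K * l2norm x"
proof -
  have bA: "\<And>n. bounded_op_on (l2_on (Y n)) (A n)" using assms by (simp add: FY_def)
  obtain MA where MA: "\<And>n. opnorm_on (l2_on (Y n)) (A n) \<le> MA"
    using assms by (auto simp: FY_def bdd_above_def)
  have "l2norm (A n x) \<le> max MA 0 * l2norm x" if x: "x \<in> l2_on (Y n)" for n x
  proof -
    obtain K where K: "\<And>u. u \<in> l2_on (Y n) \<Longrightarrow> l2norm (A n u) \<le> K * l2norm u"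
      using bounded_op_bound[OF bA] by blast
    have "l2norm (A n x) \<le> opnorm_on (l2_on (Y n)) (A n) * l2norm x"
      by (rule opnorm_le[OF _ l2_on_scale bounded_op_homog[OF bA l2_on_zero] K x])
        (auto simp: l2_on_def)
    also have "\<dots> \<le> max MA 0 * l2norm x" using MA[of n] by (intro mult_right_mono) auto
    finally show ?thesis .
  qed
  then show ?thesis using that[of "max MA 0"] by simp
qed

text \<open>Every A in S_Y(BDO) is uniformly approximable by compressed band operators
  with common shifts: approximate A by an element S of the generated *-algebra
  within e/2 and S by band operators within e/2.\<close>
lemma SY_band_approx:
  assumes A: "A \<in> SY Y" and fin: "\<And>n. finite (Y n)" and e: "e > 0"
  shows "\<exists>xs. band_approx Y A e xs"
proof -
  have FY: "A \<in> FY Y" using A by (simp add: SY_def)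
  have bA: "\<And>n. bounded_op_on (l2_on (Y n)) (A n)" using FY by (simp add: FY_def)
  obtain KA where KA: "0 \<le> KA" "\<And>n x. x \<in> l2_on (Y n) \<Longrightarrow> l2norm (A n x) \<le> KA * l2norm x"
    by (rule FY_uniform_bound[OF FY]) blast
  have e2: "e/2 > 0" using e by simp
  have "\<forall>e>0. \<exists>B\<in>sy_alg Y. \<forall>n. opnorm_on (l2_on (Y n)) (op_diff (A n) (B n)) \<le> e"
    using A by (simp add: SY_def)
  then obtain S where S: "S \<in> sy_alg Y" "\<And>n. opnorm_on (l2_on (Y n)) (op_diff (A n) (S n)) \<le> e/2"
    using e2 by blast
  have appS: "band_approximable Y S" by (rule sy_alg_band_approximable[OF S(1) fin])
  note S1 = band_approximableD(1)[OF appS] and S2 = band_approximableD(2)[OF appS]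
  obtain KS where KS: "0 \<le> KS" "\<And>n u. u \<in> l2_on (Y n) \<Longrightarrow> l2norm (S n u) \<le> KS * l2norm u"
    by (rule band_approximable_bound[OF appS]) blast
  obtain xs where xs: "band_approx Y S (e/2) xs" using band_approximableD(3)[OF appS e2] by blast
  have "band_approx Y A (e/2 + e/2) xs"
  proof (rule band_approx_perturb[OF xs S1])
    show Al: "A n u \<in> l2_on (Y n)" if "u \<in> l2_on (Y n)" for n u
      using bA that by (simp add: bounded_op_on_def)
    fix n u assume u: "u \<in> l2_on (Y n)"
    have "l2norm (op_diff (A n) (S n) u) \<le> opnorm_on (l2_on (Y n)) (op_diff (A n) (S n)) * l2norm u"
    proof (rule opnorm_le[where K = "KA + KS"])
      show "\<And>u c. u \<in> l2_on (Y n) \<Longrightarrow> op_diff (A n) (S n) (\<lambda>t. c * u t) = (\<lambda>t. c * op_diff (A n) (S n) u t)"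
        using bounded_op_homog[OF bA l2_on_zero] S2 by (simp add: op_diff_def algebra_simps)
      fix w assume w: "w \<in> l2_on (Y n)"
      have "l2norm (op_diff (A n) (S n) w) \<le> l2norm (A n w) + l2norm (S n w)"
        unfolding op_diff_def using l2_diff[OF l2_on_l2[OF Al[OF w]] l2_on_l2[OF S1[OF w]]] by blast
      also have "\<dots> \<le> (KA + KS) * l2norm w" using KA(2)[OF w] KS(2)[OF w] by (simp add: algebra_simps)
      finally show "l2norm (op_diff (A n) (S n) w) \<le> (KA + KS) * l2norm w" .
    qed (use u l2_on_scale in \<open>auto simp: l2_on_def\<close>)
    also have "\<dots> \<le> e/2 * l2norm u" by (rule mult_right_mono[OF S(2) l2norm_ge0])
    finally show "l2norm (\<lambda>t. A n u t - S n u t) \<le> e/2 * l2norm u" by (simp add: op_diff_def)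
  qed
  then show ?thesis by auto
qed

section \<open>Gluing the blocks: the operator Op\<close>

text \<open>Since (v n) is inflating, the translates Y n v_n^{-1} are pairwise
  disjoint, so each t lies in at most one of them, the block of t.  On that
  translate, Op(A) acts as the conjugated block A_n; outside their union it
  vanishes.\<close>
definition covered :: "(nat \<Rightarrow> 'g::group_add) \<Rightarrow> (nat \<Rightarrow> 'g set) \<Rightarrow> 'g \<Rightarrow> bool" where
  "covered v Y t \<longleftrightarrow> (\<exists>n. t + v n \<in> Y n)"

definition block :: "(nat \<Rightarrow> 'g::group_add) \<Rightarrow> (nat \<Rightarrow> 'g set) \<Rightarrow> 'g \<Rightarrow> nat" where
  "block v Y t = (SOME n. t + v n \<in> Y n)"

definition local_part :: "(nat \<Rightarrow> 'g::group_add) \<Rightarrow> (nat \<Rightarrow> 'g set) \<Rightarrow> nat \<Rightarrow> 'g vec \<Rightarrow> 'g vec" where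
  "local_part v Y n u = Pop (Y n) (Rop (- v n) u)"

definition glue :: "(nat \<Rightarrow> 'g::group_add) \<Rightarrow> (nat \<Rightarrow> 'g set) \<Rightarrow> (nat \<Rightarrow> 'g op) \<Rightarrow> 'g op" where
  "glue v Y F u t = (if covered v Y t
     then F (block v Y t) (local_part v Y (block v Y t) u) (t + v (block v Y t)) else 0)"

lemma inflating_unique:
  assumes "inflating v Y" "t + v m \<in> Y m" "t + v n \<in> Y n"
  shows "m = n"
proof (rule ccontr)
  assume "m \<noteq> n"
  then have d: "(\<lambda>z. z + - v m) ` Y m \<inter> (\<lambda>z. z + - v n) ` Y n = {}"
    using assms(1) by (simp add: inflating_def)
  have "t = (t + v m) + - v m" "t = (t + v n) + - v n" by simp_all
  then have "t \<in> (\<lambda>z. z + - v m) ` Y m" "t \<in> (\<lambda>z. z + - v n) ` Y n"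
    using assms(2,3) by (metis image_eqI)+
  then show False using d by blast
qed

lemma block_in: "covered v Y t \<Longrightarrow> t + v (block v Y t) \<in> Y (block v Y t)"
  using someI_ex[of "\<lambda>n. t + v n \<in> Y n"] unfolding covered_def block_def by blast

lemma local_part_l2_on:
  assumes "u \<in> l2"
  shows "local_part v Y n u \<in> l2_on (Y n)"
proof -
  have "Rop (- v n) u \<in> l2" unfolding Rop_def
    by (rule conjunct1[OF l2_comp_inj[OF assms]]) (simp add: inj_def)
  then show ?thesis unfolding local_part_def by (rule Pop_l2_on)
qed

lemma local_part_norm_sq:
  assumes "finite (Y n)"
  shows "(l2norm (local_part v Y n u))^2 = (\<Sum>t\<in>(\<lambda>z. z + - v n) ` Y n. sq u t)"
proof -
  have "(l2norm (local_part v Y n u))^2 = sum (sq (local_part v Y n u)) (Y n)"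
    using l2_finite_support[OF assms, of "local_part v Y n u"]
    by (auto simp: local_part_def Pop_def sum_nonneg)
  also have "\<dots> = (\<Sum>s\<in>Y n. sq u (s + - v n))"
    by (rule sum.cong) (auto simp: local_part_def Pop_def Rop_def sq_def)
  also have "\<dots> = (\<Sum>t\<in>(\<lambda>z. z + - v n) ` Y n. sq u t)"
    by (rule sum.reindex[symmetric, unfolded comp_def]) (auto simp: inj_on_def)
  finally show ?thesis .
qed

text \<open>On the points of a single block n, the glued operator is a translate of
  the block F n applied to the local part of u, so its mass there is bounded
  by K^2 times the mass of u on the translate Y n v_n^{-1}.\<close>
lemma glue_block_mass:
  assumes fin: "finite (Y n)"
    and Fl: "\<And>x. x \<in> l2_on (Y n) \<Longrightarrow> F n x \<in> l2_on (Y n)"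
    and Fb: "\<And>x. x \<in> l2_on (Y n) \<Longrightarrow> l2norm (F n x) \<le> K * l2norm x"
    and u: "u \<in> l2" and H: "\<And>t. t \<in> H \<Longrightarrow> covered v Y t \<and> block v Y t = n"
  shows "(\<Sum>t\<in>H. sq (glue v Y F u) t) \<le> K^2 * (\<Sum>t\<in>(\<lambda>z. z + - v n) ` Y n. sq u t)"
proof -
  define y where "y = F n (local_part v Y n u)"
  have xl: "local_part v Y n u \<in> l2_on (Y n)" by (rule local_part_l2_on[OF u])
  have y: "y \<in> l2_on (Y n)" "l2norm y \<le> K * l2norm (local_part v Y n u)"
    using Fl[OF xl] Fb[OF xl] by (auto simp: y_def)
  have Hin: "\<And>t. t \<in> H \<Longrightarrow> t + v n \<in> Y n" using block_in H by fastforce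
  have "(\<Sum>t\<in>H. sq (glue v Y F u) t) = (\<Sum>t\<in>H. sq y (t + v n))"
    by (rule sum.cong) (use H in \<open>auto simp: glue_def y_def sq_def\<close>)
  also have "\<dots> = (\<Sum>s\<in>(\<lambda>t. t + v n) ` H. sq y s)"
    by (rule sum.reindex[symmetric, unfolded comp_def]) (auto simp: inj_on_def)
  also have "\<dots> \<le> sum (sq y) (Y n)"
    by (rule sum_mono2) (use fin Hin in auto)
  also have "\<dots> = (l2norm y)^2"
    using l2_finite_support[OF fin, of y] y(1) by (auto simp: l2_on_def sum_nonneg)
  also have "\<dots> \<le> (K * l2norm (local_part v Y n u))^2" by (rule power_mono[OF y(2)]) simp
  also have "\<dots> = K^2 * (\<Sum>t\<in>(\<lambda>z. z + - v n) ` Y n. sq u t)"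
    unfolding power_mult_distrib local_part_norm_sq[of Y n, OF fin] ..
  finally show ?thesis .
qed

text \<open>Gluing uniformly bounded blocks along an inflating sequence yields a
  bounded operator with the same bound: the blocks act on the disjoint
  translates Y n v_n^{-1}, so their masses add up to at most that of u.\<close>
lemma glue_bound:
  assumes infl: "inflating v Y" and fin: "\<And>n. finite (Y n)"
    and Fl: "\<And>n x. x \<in> l2_on (Y n) \<Longrightarrow> F n x \<in> l2_on (Y n)"
    and Fb: "\<And>n x. x \<in> l2_on (Y n) \<Longrightarrow> l2norm (F n x) \<le> K * l2norm x"
    and K: "0 \<le> K" and u: "u \<in> l2"
  shows "glue v Y F u \<in> l2 \<and> l2norm (glue v Y F u) \<le> K * l2norm u"
proof (rule l2I)
  show "0 \<le> K * l2norm u" using K by simp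
  fix G :: "'a set" assume G: "finite G"
  define G' where "G' = {t \<in> G. covered v Y t}"
  have G': "finite G'" using G by (simp add: G'_def)
  define N where "N = block v Y ` G'"
  have N: "finite N" using G' by (simp add: N_def)
  define P where "P n = (\<lambda>z. z + - v n) ` Y n" for n
  have "sum (sq (glue v Y F u)) G = sum (sq (glue v Y F u)) G'"
    by (rule sum.mono_neutral_right) (auto simp: G'_def G glue_def sq_def)
  also have "\<dots> = (\<Sum>n\<in>N. \<Sum>t\<in>{t \<in> G'. block v Y t = n}. sq (glue v Y F u) t)"
    by (rule sum.group[symmetric]) (use G' N in \<open>auto simp: N_def\<close>)
  also have "\<dots> \<le> (\<Sum>n\<in>N. K^2 * sum (sq u) (P n))"
    unfolding P_def by (rule sum_mono, rule glue_block_mass[OF fin Fl Fb u]) (auto simp: G'_def)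
  also have "\<dots> = K^2 * sum (sq u) (\<Union>(P ` N))"
    unfolding sum_distrib_left[symmetric]
  proof (rule arg_cong[where f = "\<lambda>x. K^2 * x"], rule sum.UNION_disjoint[symmetric])
    show "finite N" by (rule N)
    show "\<forall>i\<in>N. finite (P i)" using fin by (simp add: P_def)
    show "\<forall>i\<in>N. \<forall>j\<in>N. i \<noteq> j \<longrightarrow> P i \<inter> P j = {}" using infl by (simp add: P_def inflating_def)
  qed
  also have "\<dots> \<le> K^2 * (l2norm u)^2"
    by (rule mult_left_mono[OF l2_finite_sum_le[OF u]]) (use fin N in \<open>auto simp: P_def\<close>)
  finally show "sum (sq (glue v Y F u)) G \<le> (K * l2norm u)^2" by (simp add: power_mult_distrib)
qed

lemma Op_partial_sum:
  assumes infl: "inflating v Y" and Fl: "\<And>n x. x \<in> l2_on (Y n) \<Longrightarrow> F n x \<in> l2_on (Y n)"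
    and u: "u \<in> l2"
  shows "(\<Sum>n<N. Op_term v Y F n u t) = (if covered v Y t \<and> block v Y t < N then glue v Y F u t else 0)"
proof -
  define g where "g n = F n (local_part v Y n u) (t + v n)" for n
  have ot: "Op_term v Y F n u t = g n" for n unfolding Op_term_def Rop_def g_def local_part_def ..
  have g0: "g n = 0" if "t + v n \<notin> Y n" for n
    using Fl[OF local_part_l2_on[OF u, of v Y n]] that by (auto simp: g_def l2_on_def)
  show ?thesis
  proof (cases "covered v Y t")
    case True
    define p where "p = block v Y t"
    have p: "t + v p \<in> Y p" using block_in[OF True] by (simp add: p_def)
    have "(\<Sum>n<N. g n) = (\<Sum>n<N. if n = p then g p else 0)"
      by (rule sum.cong) (use g0 inflating_unique[OF infl p] in auto)
    also have "\<dots> = (if p < N then g p else 0)" by simp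
    finally show ?thesis unfolding ot using True by (simp add: glue_def g_def p_def)
  next
    case False
    then have "t + v n \<notin> Y n" for n by (auto simp: covered_def)
    then show ?thesis unfolding ot using g0 False by simp
  qed
qed

lemma Op_eq_glue:
  assumes infl: "inflating v Y" and fin: "\<And>n. finite (Y n)"
    and Fl: "\<And>n x. x \<in> l2_on (Y n) \<Longrightarrow> F n x \<in> l2_on (Y n)"
    and Fb: "\<And>n x. x \<in> l2_on (Y n) \<Longrightarrow> l2norm (F n x) \<le> K * l2norm x"
    and K: "0 \<le> K" and u: "u \<in> l2"
  shows "Op v Y F u = glue v Y F u"
proof -
  define Wu where "Wu = glue v Y F u"
  have Wl2: "Wu \<in> l2" using glue_bound[OF infl fin Fl Fb K u] by (simp add: Wu_def)
  define T where "T N = {t. covered v Y t \<and> block v Y t < N}" for N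
  have ps: "(\<Sum>n<N. Op_term v Y F n u t) = Pop (T N) Wu t" for N t
    using Op_partial_sum[OF infl Fl u] by (auto simp: Pop_def T_def Wu_def)
  have conv: "(\<lambda>N. l2norm (\<lambda>t. Wu t - Pop (T N) Wu t)) \<longlonglongrightarrow> 0"
  proof (rule l2_truncation_tendsto[OF Wl2])
    fix t assume "Wu t \<noteq> 0"
    then have "covered v Y t" by (simp add: Wu_def glue_def split: if_splits)
    then show "eventually (\<lambda>N. t \<in> T N) sequentially"
      unfolding T_def eventually_sequentially by (intro exI[of _ "Suc (block v Y t)"]) auto
  qed
  have trunc_l2: "Pop (T N) Wu \<in> l2" for N using l2_Pop[OF Wl2] by blast
  have "Op v Y F u = Wu"
    unfolding Op_def ps
  proof (rule the_equality)
    fix w assume w: "w \<in> l2 \<and> (\<lambda>N. l2norm (\<lambda>t. w t - Pop (T N) Wu t)) \<longlonglongrightarrow> 0"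
    show "w = Wu"
    proof
      fix t
      show "w t = Wu t"
        using LIMSEQ_unique[OF l2_tendsto_pointwise[OF _ trunc_l2] l2_tendsto_pointwise[OF Wl2 trunc_l2 conv]] w
        by blast
    qed
  qed (use Wl2 conv in blast)
  then show ?thesis by (simp add: Wu_def)
qed

lemma glue_linear:
  assumes Flin: "\<And>n x w. x \<in> l2_on (Y n) \<Longrightarrow> w \<in> l2_on (Y n) \<Longrightarrow>
      F n (\<lambda>t. c * x t + w t) = (\<lambda>t. c * F n x t + F n w t)"
    and u: "u \<in> l2" and w: "w \<in> l2"
  shows "glue v Y F (\<lambda>t. c * u t + w t) = (\<lambda>t. c * glue v Y F u t + glue v Y F w t)"
proof
  fix t
  show "glue v Y F (\<lambda>t. c * u t + w t) t = c * glue v Y F u t + glue v Y F w t"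
  proof (cases "covered v Y t")
    case True
    define p where "p = block v Y t"
    have "local_part v Y p (\<lambda>t. c * u t + w t) = (\<lambda>s. c * local_part v Y p u s + local_part v Y p w s)"
      by (auto simp: local_part_def Pop_def Rop_def)
    then show ?thesis using True Flin[OF local_part_l2_on[OF u, of v Y p] local_part_l2_on[OF w, of v Y p]]
      unfolding glue_def p_def[symmetric] by simp
  qed (simp add: glue_def)
qed

lemma Op_bounded_op:
  assumes infl: "inflating v Y" and fin: "\<And>n. finite (Y n)"
    and bdd: "\<And>n. bounded_op_on (l2_on (Y n)) (F n)"
    and K: "0 \<le> K" "\<And>n x. x \<in> l2_on (Y n) \<Longrightarrow> l2norm (F n x) \<le> K * l2norm x"
  shows "bounded_op_on l2 (Op v Y F)"
proof -
  have Fl: "\<And>n x. x \<in> l2_on (Y n) \<Longrightarrow> F n x \<in> l2_on (Y n)"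
    using bdd by (simp add: bounded_op_on_def)
  have Op: "Op v Y F u = glue v Y F u" if "u \<in> l2" for u
    by (rule Op_eq_glue[OF infl fin Fl K(2) K(1) that])
  have bound: "glue v Y F u \<in> l2 \<and> l2norm (glue v Y F u) \<le> K * l2norm u" if "u \<in> l2" for u
    by (rule glue_bound[OF infl fin Fl K(2) K(1) that])
  show ?thesis unfolding bounded_op_on_def
  proof (intro conjI ballI allI)
    show "Op v Y F u \<in> l2" if "u \<in> l2" for u using Op[OF that] bound[OF that] by simp
    show "\<exists>C. \<forall>u\<in>l2. l2norm (Op v Y F u) \<le> C * l2norm u" using Op bound by auto
    fix u w :: "'a vec" and c :: complex assume u: "u \<in> l2" and w: "w \<in> l2"
    have cuw: "(\<lambda>t. c * u t + w t) \<in> l2" using l2_add[OF l2_scale[OF u] w] by blast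
    show "Op v Y F (\<lambda>t. c * u t + w t) = (\<lambda>t. c * Op v Y F u t + Op v Y F w t)"
      unfolding Op[OF u] Op[OF w] Op[OF cuw]
      by (rule glue_linear[OF _ u w]) (use bdd in \<open>simp add: bounded_op_on_def\<close>)
  qed
qed

text \<open>Glued compressed band operators with common shifts rs form a single band
  operator on l2(\<Gamma>) with shifts rs: the coefficient of the i-th shift at t is
  the i-th coefficient of the block containing t, read at the point t v_n and
  cut off where the shifted point leaves Y n.\<close>
definition glue_coef :: "(nat \<Rightarrow> 'g::group_add) \<Rightarrow> (nat \<Rightarrow> 'g set) \<Rightarrow>
    (nat \<Rightarrow> ('g vec \<times> 'g) list) \<Rightarrow> 'g list \<Rightarrow> nat \<Rightarrow> 'g vec" where
  "glue_coef v Y xs rs i t = (if covered v Y t then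
      fst (xs (block v Y t) ! i) (t + v (block v Y t)) *
      (if - (rs ! i) + (t + v (block v Y t)) \<in> Y (block v Y t) then 1 else 0) else 0)"

definition glue_list :: "(nat \<Rightarrow> 'g::group_add) \<Rightarrow> (nat \<Rightarrow> 'g set) \<Rightarrow>
    (nat \<Rightarrow> ('g vec \<times> 'g) list) \<Rightarrow> 'g list \<Rightarrow> ('g vec \<times> 'g) list" where
  "glue_list v Y xs rs = map (\<lambda>i. (glue_coef v Y xs rs i, rs ! i)) [0..<length rs]"

lemma bcoef_glue_list:
  assumes rs: "\<And>n. map snd (xs n) = rs" and M: "\<And>n. bcoef (xs n) M"
  shows "bcoef (glue_list v Y xs rs) (max M 0)"
  unfolding bcoef_def
proof (intro ballI allI)
  fix q and t :: 'a assume "q \<in> set (glue_list v Y xs rs)"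
  then obtain i where i: "i < length rs" "q = (glue_coef v Y xs rs i, rs ! i)"
    unfolding glue_list_def by auto
  have "cmod (glue_coef v Y xs rs i t) \<le> max M 0"
  proof (cases "covered v Y t")
    case True
    define p where "p = block v Y t"
    have "xs p ! i \<in> set (xs p)" using i(1) rs[of p] by (metis length_map nth_mem)
    then have "cmod (fst (xs p ! i) (t + v p)) \<le> M" using M[of p] unfolding bcoef_def by blast
    then show ?thesis unfolding glue_coef_def p_def[symmetric] using True by (auto simp: norm_mult)
  qed (simp add: glue_coef_def)
  then show "cmod (fst q t) \<le> max M 0" using i by simp
qed

lemma glue_bandL:
  assumes rs: "\<And>n. map snd (xs n) = rs"
  shows "glue v Y (\<lambda>n. bandL (Y n) (xs n)) u = band (glue_list v Y xs rs) u"
proof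
  fix t
  define L where "L = length rs"
  have len: "\<And>n. length (xs n) = L" unfolding L_def using rs by (metis length_map)
  have bs: "band (glue_list v Y xs rs) u t = (\<Sum>i<L. glue_coef v Y xs rs i t * u (- (rs ! i) + t))"
    unfolding band_sum by (simp add: glue_list_def L_def)
  show "glue v Y (\<lambda>n. bandL (Y n) (xs n)) u t = band (glue_list v Y xs rs) u t"
  proof (cases "covered v Y t")
    case True
    define p where "p = block v Y t"
    have pin: "t + v p \<in> Y p" using block_in[OF True] by (simp add: p_def)
    have "glue v Y (\<lambda>n. bandL (Y n) (xs n)) u t = band (xs p) (local_part v Y p u) (t + v p)"
      using True pin unfolding glue_def p_def[symmetric] bandL_def by (simp add: local_part_def Pop_in)
    also have "\<dots> = (\<Sum>i<L. fst (xs p ! i) (t + v p) * local_part v Y p u (- snd (xs p ! i) + (t + v p)))"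
      unfolding band_sum len ..
    also have "\<dots> = (\<Sum>i<L. glue_coef v Y xs rs i t * u (- (rs ! i) + t))"
    proof (rule sum.cong)
      fix i assume "i \<in> {..<L}"
      then have s: "snd (xs p ! i) = rs ! i" using rs[of p] len by (metis lessThan_iff nth_map)
      have "- (rs ! i) + (t + v p) + - v p = - (rs ! i) + t" by (simp add: add.assoc[symmetric])
      then show "fst (xs p ! i) (t + v p) * local_part v Y p u (- snd (xs p ! i) + (t + v p))
          = glue_coef v Y xs rs i t * u (- (rs ! i) + t)"
        unfolding s glue_coef_def p_def[symmetric] using True by (simp add: local_part_def Pop_def Rop_def)
    qed simp
    finally show ?thesis using bs by simp
  qed (simp add: bs glue_coef_def glue_def)
qed

lemma Op_band_approx:
  assumes infl: "inflating v Y" and fin: "\<And>n. finite (Y n)"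
    and bdd: "\<And>n. bounded_op_on (l2_on (Y n)) (F n)"
    and K: "0 \<le> K" "\<And>n x. x \<in> l2_on (Y n) \<Longrightarrow> l2norm (F n x) \<le> K * l2norm x"
    and ap: "band_approx Y F e xs" and e: "0 \<le> e"
  shows "\<exists>B\<in>bdo_alg. opnorm_on l2 (op_diff (Op v Y F) B) \<le> e"
proof -
  have Fl: "\<And>n x. x \<in> l2_on (Y n) \<Longrightarrow> F n x \<in> l2_on (Y n)"
    using bdd by (simp add: bounded_op_on_def)
  obtain rs M where x: "\<And>n. map snd (xs n) = rs" "\<And>n. bcoef (xs n) M"
    "\<And>n u. u \<in> l2_on (Y n) \<Longrightarrow> l2norm (\<lambda>t. F n u t - bandL (Y n) (xs n) u t) \<le> e * l2norm u"
    using ap by (rule band_approxE) blast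
  define gl where "gl = glue_list v Y xs rs"
  have gl: "bcoef gl (max M 0)" "\<And>u. glue v Y (\<lambda>n. bandL (Y n) (xs n)) u = band gl u"
    unfolding gl_def by (rule bcoef_glue_list[OF x(1,2)], rule glue_bandL[OF x(1)])
  define D where "D n x = (\<lambda>t. F n x t - bandL (Y n) (xs n) x t)" for n x
  have Dl: "D n x \<in> l2_on (Y n)" if "x \<in> l2_on (Y n)" for n x
    unfolding D_def using l2_on_diff[OF Fl[OF that] conjunct1[OF bandL_l2_on[OF that x(2)]]] .
  have Db: "l2norm (D n x) \<le> e * l2norm x" if "x \<in> l2_on (Y n)" for n x
    using x(3)[OF that] by (simp add: D_def)
  have glue_diff: "op_diff (Op v Y F) (band gl) u = glue v Y D u" if u: "u \<in> l2" for u
  proof -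
    have "Op v Y F u = glue v Y F u" by (rule Op_eq_glue[OF infl fin Fl K(2) K(1) u])
    then show ?thesis unfolding op_diff_def gl(2)[symmetric] by (auto simp: glue_def D_def)
  qed
  have "opnorm_on l2 (op_diff (Op v Y F) (band gl)) \<le> e"
  proof (rule opnorm_least[of l2 _ e "\<lambda>t. 0"])
    fix u :: "'a vec" assume u: "u \<in> l2" "l2norm u \<le> 1"
    have "l2norm (glue v Y D u) \<le> e * l2norm u"
      using glue_bound[of v Y D e u, OF infl fin Dl Db e u(1)] by simp
    also have "\<dots> \<le> e" using u(2) e by (simp add: mult_left_le)
    finally show "l2norm (op_diff (Op v Y F) (band gl) u) \<le> e" using glue_diff[OF u(1)] by simp
  qed auto
  then show ?thesis using band_bdo_alg[OF gl(1)] by blast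
qed

theorem mainTheorem5:
  fixes Y :: "nat \<Rightarrow> ('g::{group_add, countable}) set"
    and v :: "nat \<Rightarrow> 'g"
    and A :: "nat \<Rightarrow> 'g op"
  assumes "\<And>n. finite (Y n)"
    and "\<And>n. Y n \<subseteq> Y (Suc n)"
    and "(\<Union>n. Y n) = UNIV"
    and "inflating v Y"
    and "A \<in> SY Y"
  shows "Op v Y A \<in> BDO"
proof -
  note fin = assms(1) and infl = assms(4)
  have FY: "A \<in> FY Y" using assms(5) by (simp add: SY_def)
  have bdd: "\<And>n. bounded_op_on (l2_on (Y n)) (A n)" using FY by (simp add: FY_def)
  obtain K where K: "0 \<le> K" "\<And>n x. x \<in> l2_on (Y n) \<Longrightarrow> l2norm (A n x) \<le> K * l2norm x"
    using FY_uniform_bound[OF FY] by blast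
  have "bounded_op_on l2 (Op v Y A)" by (rule Op_bounded_op[OF infl fin bdd K])
  moreover have "\<exists>B\<in>bdo_alg. opnorm_on l2 (op_diff (Op v Y A) B) \<le> e" if e: "e > 0" for e
  proof -
    obtain xs where xs: "band_approx Y A e xs" using SY_band_approx[OF assms(5) fin e] by blast
    show ?thesis by (rule Op_band_approx[of v Y A K e xs]) (use infl fin bdd K xs e in auto)
  qed
  ultimately show ?thesis unfolding BDO_def by blast
qed

end
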